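(* Suppose Assumption A1 and Assumption A2(ii) hold, let $K$ be $(\kappa,\gamma)$-strongly stable and $H=\lceil2\gamma^{-1}\log T\rceil$. Then for any $C>0$, $T\ge3$ and $M\in\mathcal M$: $$\mathbb P\Big(\sum_{t=0}^{T-1}\|\nabla_Mf_t(M)\|_F^2\le CT(\log T)^4\Big)\ge1-\frac{26244\sigma_w^4n^2G_c^2\kappa_B^6\kappa^{18}}{C\gamma^8(1-\gamma)^4},$$ $$\mathbb P\Big(\sum_{t=0}^{T-1}\sum_{i=1}^{\min\{H+1,t\}}\sum_{k=1}^i\|\nabla_Mf_{t-k}(M)\|_F\le CT(\log T)^{9/2}\Big)\ge1-\frac{39366\sigma_w^2n^2G_c\kappa_B^3\kappa^9}{C\gamma^{13/2}(1-\gamma)^2}.$$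
   Context: Linear system $x_{t+1}=Ax_t+Bu_t+w_t$, $x_t,w_t\in\mathbb R^{n_x}$, $u_t\in\mathbb R^{n_u}$; $n:=\max\{n_x,n_u\}$, $\kappa_B:=\max\{\|B\|,1\}$; $w_s:=0$ for $s<0$. $(\kappa,\gamma)$-strong stability: complex $P,Q$ with $A-BK=QPQ^{-1}$, $\|P\|\le1-\gamma$, $\|K\|,\|Q\|,\|Q^{-1}\|\le\kappa$. $A_K:=A-BK$. Assumption A1: $c_t$ convex, differentiable, $\|\nabla_xc_t(x,u)\|\le G_c\|x\|$, $\|\nabla_uc_t(x,u)\|\le G_c\|u\|$, $G_c\ge1$. Assumption A2(ii): $\mathbb E\|w_t\|^4\le\sigma_w^4$ for all $t$. For $M=\{M^{[0]},\dots,M^{[H-1]}\}$, $\|M\|_F:=\|[M^{[0]},\dots,M^{[H-1]}]\|_F$; $\mathcal M:=\{M:\|M^{[i]}\|\le2\kappa_B\kappa^3(1-\gamma)^i\}$. Surrogate: $\Psi^{K,h}_{t,i}(M_{t-h:t}):=A_K^i\mathbf 1_{i\le h}+\sum_{j=0}^hA_K^jBM_{t-j}^{[i-j-1]}\mathbf 1_{i-j\in[1,H]}$; $y_t:=\sum_{i=0}^{2H}\Psi^{K,H}_{t-1,i}(M_{t-1-H:t-1})w_{t-1-i}$; $v_t:=-Ky_t+\sum_{i=1}^HM_t^{[i-1]}w_{t-i}$; $F_t(M_{t-1-H:t}):=c_t(y_t,v_t)$; $f_t(M):=F_t(M,\dots,M)$; $\nabla_Mf_t$ is the gradient with respect to all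 entries of $M$. *)

theory Defs
  imports "HOL-Analysis.Analysis" "HOL-Probability.Probability"
begin

text \<open>Matrix power (the built-in power on vec types is componentwise, hence not usable).\<close>
primrec matpow :: "('a::semiring_1)^'n^'n \<Rightarrow> nat \<Rightarrow> 'a^'n^'n" where
  "matpow X 0 = mat 1"
| "matpow X (Suc k) = X ** matpow X k"

definition opnorm :: "('a::real_normed_field)^'n^'m \<Rightarrow> real" where
  "opnorm X = onorm (\<lambda>x. X *v x)"

definition frob :: "real^'n^'m \<Rightarrow> real" where
  "frob X = sqrt (\<Sum>a\<in>UNIV. \<Sum>b\<in>UNIV. (X $ a $ b)^2)"

definition strongly_stable ::
  "real^'nx^'nx \<Rightarrow> real^'nu^'nx \<Rightarrow> real^'nx^'nu \<Rightarrow> real \<Rightarrow> real \<Rightarrow> bool" where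
  "strongly_stable A B K \<kappa> \<gamma> \<longleftrightarrow>
     (\<exists>P Q :: complex^'nx^'nx. invertible Q \<and>
        map_matrix complex_of_real (A - B ** K) = Q ** P ** matrix_inv Q \<and>
        opnorm P \<le> 1 - \<gamma> \<and> opnorm K \<le> \<kappa> \<and> opnorm Q \<le> \<kappa> \<and> opnorm (matrix_inv Q) \<le> \<kappa>)"

definition wext :: "(nat \<Rightarrow> 'w \<Rightarrow> real^'nx) \<Rightarrow> int \<Rightarrow> 'w \<Rightarrow> real^'nx" where
  "wext w s \<omega> = (if s < 0 then 0 else w (nat s) \<omega>)"

text \<open>Surrogate transfer matrix Psi^{K,h}_{t,i}(M_{t-h:t}); Ms s is the policy M_s at time s,
  a family of H matrices M_s^[0..H-1].\<close>
definition Psi ::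
  "real^'nx^'nx \<Rightarrow> real^'nu^'nx \<Rightarrow> real^'nx^'nu \<Rightarrow> nat \<Rightarrow> nat \<Rightarrow>
   (int \<Rightarrow> nat \<Rightarrow> real^'nx^'nu) \<Rightarrow> int \<Rightarrow> nat \<Rightarrow> real^'nx^'nx" where
  "Psi A B K H h Ms t i =
     (if i \<le> h then matpow (A - B ** K) i else 0)
     + (\<Sum>j\<in>{0..h}. if 1 \<le> int i - int j \<and> int i - int j \<le> int H
                     then matpow (A - B ** K) j ** B ** Ms (t - int j) (i - j - 1) else 0)"

definition ystate ::
  "real^'nx^'nx \<Rightarrow> real^'nu^'nx \<Rightarrow> real^'nx^'nu \<Rightarrow> nat \<Rightarrow>
   (int \<Rightarrow> nat \<Rightarrow> real^'nx^'nu) \<Rightarrow> (nat \<Rightarrow> 'w \<Rightarrow> real^'nx) \<Rightarrow> nat \<Rightarrow> 'w \<Rightarrow> real^'nx" where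
  "ystate A B K H Ms w t \<omega> =
     (\<Sum>i\<in>{0..2*H}. Psi A B K H H Ms (int t - 1) i *v wext w (int t - 1 - int i) \<omega>)"

definition vinput ::
  "real^'nx^'nx \<Rightarrow> real^'nu^'nx \<Rightarrow> real^'nx^'nu \<Rightarrow> nat \<Rightarrow>
   (int \<Rightarrow> nat \<Rightarrow> real^'nx^'nu) \<Rightarrow> (nat \<Rightarrow> 'w \<Rightarrow> real^'nx) \<Rightarrow> nat \<Rightarrow> 'w \<Rightarrow> real^'nu" where
  "vinput A B K H Ms w t \<omega> =
     - (K *v ystate A B K H Ms w t \<omega>)
     + (\<Sum>i\<in>{1..H}. Ms (int t) (i - 1) *v wext w (int t - int i) \<omega>)"

definition Fcost ::
  "(nat \<Rightarrow> real^'nx \<Rightarrow> real^'nu \<Rightarrow> real) \<Rightarrow> real^'nx^'nx \<Rightarrow> real^'nu^'nx \<Rightarrow> real^'nx^'nu \<Rightarrow> nat \<Rightarrow>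
   (int \<Rightarrow> nat \<Rightarrow> real^'nx^'nu) \<Rightarrow> (nat \<Rightarrow> 'w \<Rightarrow> real^'nx) \<Rightarrow> nat \<Rightarrow> 'w \<Rightarrow> real" where
  "Fcost c A B K H Ms w t \<omega> = c t (ystate A B K H Ms w t \<omega>) (vinput A B K H Ms w t \<omega>)"

definition fcost ::
  "(nat \<Rightarrow> real^'nx \<Rightarrow> real^'nu \<Rightarrow> real) \<Rightarrow> real^'nx^'nx \<Rightarrow> real^'nu^'nx \<Rightarrow> real^'nx^'nu \<Rightarrow> nat \<Rightarrow>
   (nat \<Rightarrow> real^'nx^'nu) \<Rightarrow> (nat \<Rightarrow> 'w \<Rightarrow> real^'nx) \<Rightarrow> nat \<Rightarrow> 'w \<Rightarrow> real" where
  "fcost c A B K H M w t \<omega> = Fcost c A B K H (\<lambda>_. M) w t \<omega>"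

definition munit :: "'nu \<Rightarrow> 'nx \<Rightarrow> real^'nx^'nu" where
  "munit a b = (\<chi> i j. if i = a \<and> j = b then 1 else 0)"

definition grad_frob ::
  "(nat \<Rightarrow> real^'nx \<Rightarrow> real^'nu \<Rightarrow> real) \<Rightarrow> real^'nx^'nx \<Rightarrow> real^'nu^'nx \<Rightarrow> real^'nx^'nu \<Rightarrow> nat \<Rightarrow>
   (nat \<Rightarrow> real^'nx^'nu) \<Rightarrow> (nat \<Rightarrow> 'w \<Rightarrow> real^'nx) \<Rightarrow> nat \<Rightarrow> 'w \<Rightarrow> real" where
  "grad_frob c A B K H M w t \<omega> =
     sqrt (\<Sum>i<H. \<Sum>a\<in>(UNIV::'nu set). \<Sum>b\<in>(UNIV::'nx set).
        (deriv (\<lambda>s. fcost c A B K H (M(i := M i + s *\<^sub>R munit a b)) w t \<omega>) 0)^2)"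

definition assm_A1 :: "(nat \<Rightarrow> real^'nx \<Rightarrow> real^'nu \<Rightarrow> real) \<Rightarrow> real \<Rightarrow> bool" where
  "assm_A1 c Gc \<longleftrightarrow> Gc \<ge> 1 \<and>
     (\<forall>t. convex_on UNIV (\<lambda>p. c t (fst p) (snd p)) \<and>
       (\<forall>x u. \<exists>gx gu. ((\<lambda>p. c t (fst p) (snd p)) has_derivative (\<lambda>h. gx \<bullet> fst h + gu \<bullet> snd h)) (at (x, u))
               \<and> norm gx \<le> Gc * norm x \<and> norm gu \<le> Gc * norm u))"

definition (in prob_space) assm_A2ii :: "(nat \<Rightarrow> 'a \<Rightarrow> real^'nx) \<Rightarrow> real \<Rightarrow> bool" where
  "assm_A2ii w \<sigma> \<longleftrightarrow> (\<forall>t. random_variable borel (w t) \<and>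
      integrable M (\<lambda>\<omega>. norm (w t \<omega>) ^ 4) \<and> expectation (\<lambda>\<omega>. norm (w t \<omega>) ^ 4) \<le> \<sigma> ^ 4)"

definition Mset :: "nat \<Rightarrow> real \<Rightarrow> real \<Rightarrow> real \<Rightarrow> (nat \<Rightarrow> real^'nx^'nu) set" where
  "Mset H \<kappa>B \<kappa> \<gamma> = {M. \<forall>i<H. opnorm (M i) \<le> 2 * \<kappa>B * \<kappa>^3 * (1 - \<gamma>)^i}"

end

theory Submission
  imports Defs
begin

text \<open>
  For a time-invariant policy, \<open>y\<^sub>t\<close> and \<open>v\<^sub>t\<close> are affine in each block \<open>M\<^sup>[i\<^sup>]\<close>, so
  the partial derivatives of \<open>f\<^sub>t\<close> in block \<open>i\<close> are pairings of the cost gradient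
  \<open>(g\<^sub>x, g\<^sub>u)\<close> with lagged noises propagated through \<open>A\<^sub>K\<^sup>jB\<close>. By A1 and strong stability,
  \<open>\<parallel>\<nabla>\<^sub>Mf\<^sub>t\<parallel>\<^sub>F\<close> is at most \<open>G\<^sub>c\<close> times a sum over \<open>i < H\<close> of products of two weighted sums
  of noise norms \<open>\<parallel>w\<^sub>t\<^sub>-\<^sub>1\<^sub>-\<^sub>l\<parallel>\<close>, with geometrically decaying weights of total mass
  \<open>O(\<kappa>\<^sub>B\<^sup>2\<kappa>\<^sup>7/\<gamma>\<^sup>2)\<close> and \<open>O(\<kappa>\<^sup>2\<kappa>\<^sub>B/\<gamma>)\<close>. AM-GM and Jensen bound these products by weighted
  sums of \<open>\<parallel>w\<parallel>\<^sup>4\<close> (resp. \<open>\<parallel>w\<parallel>\<^sup>2\<close>), whose means A2(ii) controls, and Markov's inequality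
  together with \<open>H \<le> 3 log T / \<gamma>\<close> gives both tail bounds.
\<close>

section \<open>Operator norm and strong stability\<close>

lemma norm_matrix_vector_le_opnorm:
  "norm ((X::'a::{real_normed_field,euclidean_space}^'n^'m) *v x) \<le> opnorm X * norm x"
  unfolding opnorm_def by (rule onorm[OF matrix_vector_mul_bounded_linear])

lemma opnorm_nonneg: "0 \<le> opnorm (X::'a::{real_normed_field,euclidean_space}^'n^'m)"
  unfolding opnorm_def by (rule onorm_pos_le[OF matrix_vector_mul_bounded_linear])

lemma opnorm_le:
  "(\<And>x. norm ((X::'a::{real_normed_field,euclidean_space}^'n^'m) *v x) \<le> b * norm x) \<Longrightarrow> opnorm X \<le> b"
  unfolding opnorm_def by (rule onorm_le) auto

lemma opnorm_matrix_mult_le: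
  "opnorm ((X::'a::{real_normed_field,euclidean_space}^'n^'m) ** Y) \<le> opnorm X * opnorm Y"
proof (rule opnorm_le)
  fix x
  have "norm ((X ** Y) *v x) = norm (X *v (Y *v x))" by (simp add: matrix_vector_mul_assoc)
  also have "\<dots> \<le> opnorm X * norm (Y *v x)" by (rule norm_matrix_vector_le_opnorm)
  also have "\<dots> \<le> opnorm X * (opnorm Y * norm x)"
    by (rule mult_left_mono[OF norm_matrix_vector_le_opnorm opnorm_nonneg])
  finally show "norm ((X ** Y) *v x) \<le> opnorm X * opnorm Y * norm x" by (simp add: mult.assoc)
qed

lemma opnorm_mat1: "opnorm (mat 1 :: 'a::{real_normed_field,euclidean_space}^'n^'n) = 1"
proof (rule antisym)
  show "opnorm (mat 1 :: 'a^'n^'n) \<le> 1" by (rule opnorm_le) simp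
  obtain i :: 'n where True by auto
  have "norm (axis i (1::'a)) = 1"
    unfolding norm_vec_def L2_set_def axis_def by (simp add: if_distrib if_distribR cong: if_cong)
  then show "1 \<le> opnorm (mat 1 :: 'a^'n^'n)"
    using norm_matrix_vector_le_opnorm[of "mat 1 :: 'a^'n^'n" "axis i 1"] by simp
qed

lemma opnorm_matpow_le: "opnorm (matpow (X::'a::{real_normed_field,euclidean_space}^'n^'n) j) \<le> opnorm X ^ j"
proof (induction j)
  case 0 then show ?case by (simp add: opnorm_mat1)
next
  case (Suc j)
  have "opnorm (matpow X (Suc j)) \<le> opnorm X * opnorm (matpow X j)" by (simp add: opnorm_matrix_mult_le)
  also have "\<dots> \<le> opnorm X * opnorm X ^ j" by (rule mult_left_mono[OF Suc opnorm_nonneg])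
  finally show ?case by simp
qed

lemma opnorm_zero [simp]: "opnorm (0::'a::{real_normed_field,euclidean_space}^'n^'m) = 0"
  using opnorm_le[of "0::'a^'n^'m" 0] opnorm_nonneg[of "0::'a^'n^'m"] by simp

lemma opnorm_add_le:
  "opnorm ((X::'a::{real_normed_field,euclidean_space}^'n^'m) + Y) \<le> opnorm X + opnorm Y"
proof (rule opnorm_le)
  fix x
  have "norm ((X + Y) *v x) \<le> norm (X *v x) + norm (Y *v x)"
    by (simp add: matrix_vector_mult_add_rdistrib norm_triangle_ineq)
  also have "\<dots> \<le> opnorm X * norm x + opnorm Y * norm x"
    by (intro add_mono norm_matrix_vector_le_opnorm)
  finally show "norm ((X + Y) *v x) \<le> (opnorm X + opnorm Y) * norm x" by (simp add: algebra_simps)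
qed

lemma opnorm_sum_le:
  "opnorm (\<Sum>j\<in>S. (X j::'a::{real_normed_field,euclidean_space}^'n^'m)) \<le> (\<Sum>j\<in>S. opnorm (X j))"
  by (induction S rule: infinite_finite_induct) (auto intro: order_trans[OF opnorm_add_le])

definition complexify :: "real^'n^'m \<Rightarrow> complex^'n^'m" where
  "complexify X = map_matrix complex_of_real X"

lemma complexify_mult: "complexify (X ** Y) = complexify X ** complexify Y"
  unfolding complexify_def by (simp add: vec_eq_iff matrix_matrix_mult_def)

lemma complexify_mat1: "complexify (mat 1) = mat 1"
  unfolding complexify_def by (simp add: vec_eq_iff mat_def)

lemma opnorm_le_opnorm_complexify: "opnorm (X::real^'n^'m) \<le> opnorm (complexify X)"
proof (rule opnorm_le)
  fix x :: "real^'n"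
  have norm_embed: "norm (\<chi> i. complex_of_real (v$i)) = norm v" for v :: "real^'k"
    by (simp add: norm_vec_def)
  have "complexify X *v (\<chi> i. complex_of_real (x$i)) = (\<chi> i. complex_of_real ((X *v x)$i))"
    by (simp add: complexify_def vec_eq_iff matrix_vector_mult_def)
  then have "norm (X *v x) = norm (complexify X *v (\<chi> i. complex_of_real (x$i)))"
    by (simp add: norm_embed)
  also have "\<dots> \<le> opnorm (complexify X) * norm x"
    using norm_matrix_vector_le_opnorm by (metis norm_embed)
  finally show "norm (X *v x) \<le> opnorm (complexify X) * norm x" .
qed

lemma strongly_stableD:
  fixes A :: "real^'nx^'nx" and B :: "real^'nu^'nx" and K :: "real^'nx^'nu"
  assumes ss: "strongly_stable A B K \<kappa> \<gamma>" and "\<gamma> < 1"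
  shows "1 \<le> \<kappa>" "opnorm K \<le> \<kappa>" "opnorm (matpow (A - B ** K) j) \<le> \<kappa>^2 * (1-\<gamma>)^j"
proof -
  obtain P Q :: "complex^'nx^'nx" where inv: "invertible Q" and
    eq: "complexify (A - B ** K) = Q ** P ** matrix_inv Q" and
    nP: "opnorm P \<le> 1 - \<gamma>" and nK: "opnorm K \<le> \<kappa>" and nQ: "opnorm Q \<le> \<kappa>"
    and nQi: "opnorm (matrix_inv Q) \<le> \<kappa>"
    using ss unfolding strongly_stable_def complexify_def by blast
  define Qi where "Qi = matrix_inv Q"
  have QQi: "Q ** Qi = mat 1" "Qi ** Q = mat 1"
    using inv unfolding invertible_def Qi_def matrix_inv_def by (metis (mono_tags, lifting) someI_ex)+
  show "opnorm K \<le> \<kappa>" by fact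
  have k0: "0 \<le> \<kappa>" using nQ opnorm_nonneg order_trans by blast
  have "1 = opnorm (Q ** Qi)" by (simp add: QQi opnorm_mat1)
  also have "\<dots> \<le> opnorm Q * opnorm Qi" by (rule opnorm_matrix_mult_le)
  also have "\<dots> \<le> \<kappa> * \<kappa>" using nQ nQi k0 by (intro mult_mono) (auto simp: Qi_def opnorm_nonneg)
  finally have "1 \<le> \<kappa> * \<kappa>" .
  then show "1 \<le> \<kappa>"
    using k0 mult_strict_mono'[of \<kappa> 1 \<kappa> 1] by (cases "\<kappa> < 1") auto
  have pow: "complexify (matpow (A - B ** K) j) = Q ** matpow P j ** Qi"
  proof (induction j)
    case 0 then show ?case by (simp add: complexify_mat1 QQi)
  next
    case (Suc j)
    have "complexify (matpow (A - B ** K) (Suc j)) = (Q ** P ** Qi) ** (Q ** matpow P j ** Qi)"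
      by (simp add: complexify_mult Suc eq Qi_def)
    also have "\<dots> = Q ** P ** (Qi ** Q) ** matpow P j ** Qi" by (simp add: matrix_mul_assoc)
    finally show ?case by (simp add: QQi matrix_mul_assoc)
  qed
  have "opnorm (matpow (A - B ** K) j) \<le> opnorm (Q ** matpow P j ** Qi)"
    using opnorm_le_opnorm_complexify pow by metis
  also have "\<dots> \<le> opnorm Q * opnorm (matpow P j) * opnorm Qi"
    by (meson opnorm_matrix_mult_le opnorm_nonneg mult_right_mono order_trans)
  also have "\<dots> \<le> \<kappa> * (1-\<gamma>)^j * \<kappa>"
  proof (intro mult_mono)
    show "opnorm (matpow P j) \<le> (1 - \<gamma>) ^ j"
      using opnorm_matpow_le[of P j] power_mono[OF nP opnorm_nonneg, of j] by linarith
  qed (use nQ nQi Qi_def k0 assms(2) opnorm_nonneg in auto)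
  finally show "opnorm (matpow (A - B ** K) j) \<le> \<kappa>^2 * (1-\<gamma>)^j"
    by (simp add: power2_eq_square mult_ac)
qed

section \<open>Directional derivatives of the surrogate cost\<close>

lemma matrix_vector_mult_sum_left: "(\<Sum>j\<in>S. X j) *v (x::'a::semiring_1^'n) = (\<Sum>j\<in>S. X j *v x)"
  by (induction S rule: infinite_finite_induct) (auto simp: matrix_vector_mult_add_rdistrib)

lemma matrix_vector_mult_sum_right: "X *v (\<Sum>j\<in>S. f j) = (\<Sum>j\<in>S. X *v (f j :: 'a::comm_ring_1^'n))"
  by (induction S rule: infinite_finite_induct) (auto simp: matrix_vector_right_distrib)

lemma scaleR_matrix_vector_mult: "(s *\<^sub>R X) *v (x::real^'n) = s *\<^sub>R (X *v x)"
  by (simp add: vec_eq_iff matrix_vector_mult_def sum_distrib_left mult_ac)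

text \<open>Derivatives of \<open>\<Psi>\<close>, \<open>y\<^sub>t\<close> and \<open>v\<^sub>t\<close> when the single block \<open>M\<^sup>[i\<^sup>]\<close> of a
  time-invariant policy moves in direction \<open>E\<close>; all three depend affinely on the policy.\<close>

definition Psi_dir ::
  "real^'nx^'nx \<Rightarrow> real^'nu^'nx \<Rightarrow> real^'nx^'nu \<Rightarrow> nat \<Rightarrow> nat \<Rightarrow> real^'nx^'nu \<Rightarrow> nat \<Rightarrow> real^'nx^'nx"
where
  "Psi_dir A B K h i E l = (\<Sum>j\<in>{0..h}. if l = i + j + 1 then matpow (A - B ** K) j ** B ** E else 0)"

definition ystate_dir ::
  "real^'nx^'nx \<Rightarrow> real^'nu^'nx \<Rightarrow> real^'nx^'nu \<Rightarrow> nat \<Rightarrow> nat \<Rightarrow> real^'nx^'nu \<Rightarrow>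
   (nat \<Rightarrow> 'w \<Rightarrow> real^'nx) \<Rightarrow> nat \<Rightarrow> 'w \<Rightarrow> real^'nx"
where
  "ystate_dir A B K H i E w t \<omega> =
     (\<Sum>l\<in>{0..2*H}. Psi_dir A B K H i E l *v wext w (int t - 1 - int l) \<omega>)"

definition vinput_dir ::
  "real^'nx^'nx \<Rightarrow> real^'nu^'nx \<Rightarrow> real^'nx^'nu \<Rightarrow> nat \<Rightarrow> nat \<Rightarrow> real^'nx^'nu \<Rightarrow>
   (nat \<Rightarrow> 'w \<Rightarrow> real^'nx) \<Rightarrow> nat \<Rightarrow> 'w \<Rightarrow> real^'nu"
where
  "vinput_dir A B K H i E w t \<omega> =
     - (K *v ystate_dir A B K H i E w t \<omega>) + E *v wext w (int t - int (Suc i)) \<omega>"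

lemma Psi_update_block:
  assumes "i < H"
  shows "Psi A B K H h (\<lambda>_. M(i := M i + s *\<^sub>R E)) \<tau> l
           = Psi A B K H h (\<lambda>_. M) \<tau> l + s *\<^sub>R Psi_dir A B K h i E l"
proof -
  have "(\<Sum>j\<in>{0..h}. if 1 \<le> int l - int j \<and> int l - int j \<le> int H
          then matpow (A - B ** K) j ** B ** (M(i := M i + s *\<^sub>R E)) (l - j - 1) else 0)
      = (\<Sum>j\<in>{0..h}. (if 1 \<le> int l - int j \<and> int l - int j \<le> int H
          then matpow (A - B ** K) j ** B ** M (l - j - 1) else 0)
          + s *\<^sub>R (if l = i + j + 1 then matpow (A - B ** K) j ** B ** E else 0))"
    using assms
    by (intro sum.cong) (auto simp: matrix_add_ldistrib matrix_scalar_ac scalar_matrix_assoc)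
  then show ?thesis
    unfolding Psi_def Psi_dir_def by (simp add: sum.distrib scaleR_sum_right add.assoc)
qed

lemma ystate_update_block:
  assumes "i < H"
  shows "ystate A B K H (\<lambda>_. M(i := M i + s *\<^sub>R E)) w t \<omega>
           = ystate A B K H (\<lambda>_. M) w t \<omega> + s *\<^sub>R ystate_dir A B K H i E w t \<omega>"
  unfolding ystate_def ystate_dir_def Psi_update_block[OF assms]
  by (simp add: matrix_vector_mult_add_rdistrib scaleR_matrix_vector_mult sum.distrib scaleR_sum_right)

lemma vinput_update_block:
  assumes "i < H"
  shows "vinput A B K H (\<lambda>_. M(i := M i + s *\<^sub>R E)) w t \<omega>
           = vinput A B K H (\<lambda>_. M) w t \<omega> + s *\<^sub>R vinput_dir A B K H i E w t \<omega>"
proof -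
  have "(\<Sum>i'\<in>{1..H}. (M(i := M i + s *\<^sub>R E)) (i' - 1) *v wext w (int t - int i') \<omega>)
     = (\<Sum>i'\<in>{1..H}. M (i' - 1) *v wext w (int t - int i') \<omega>
        + s *\<^sub>R (if i' = Suc i then E *v wext w (int t - int i') \<omega> else 0))"
    by (rule sum.cong) (auto simp: matrix_vector_mult_add_rdistrib scaleR_matrix_vector_mult)
  also have "\<dots> = (\<Sum>i'\<in>{1..H}. M (i' - 1) *v wext w (int t - int i') \<omega>)
        + s *\<^sub>R (E *v wext w (int t - int (Suc i)) \<omega>)"
    using assms by (simp add: sum.distrib scaleR_sum_right[symmetric] sum.delta')
  finally show ?thesis
    unfolding vinput_def vinput_dir_def ystate_update_block[OF assms]
    by (simp add: algebra_simps)
qed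

lemma fcost_update_block_has_derivative:
  assumes "i < H"
    and c_deriv: "((\<lambda>p. c t (fst p) (snd p)) has_derivative (\<lambda>h. gx \<bullet> fst h + gu \<bullet> snd h))
      (at (ystate A B K H (\<lambda>_. M) w t \<omega>, vinput A B K H (\<lambda>_. M) w t \<omega>))"
  shows "((\<lambda>s. fcost c A B K H (M(i := M i + s *\<^sub>R E)) w t \<omega>) has_real_derivative
      (gx \<bullet> ystate_dir A B K H i E w t \<omega> + gu \<bullet> vinput_dir A B K H i E w t \<omega>)) (at 0)"
proof -
  define y0 where "y0 = ystate A B K H (\<lambda>_. M) w t \<omega>"
  define v0 where "v0 = vinput A B K H (\<lambda>_. M) w t \<omega>"
  define dy where "dy = ystate_dir A B K H i E w t \<omega>"
  define dv where "dv = vinput_dir A B K H i E w t \<omega>"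
  have line: "((\<lambda>s::real. (y0 + s *\<^sub>R dy, v0 + s *\<^sub>R dv)) has_derivative (\<lambda>h. (h *\<^sub>R dy, h *\<^sub>R dv))) (at 0)"
    by (auto intro!: derivative_eq_intros)
  have "((\<lambda>p. c t (fst p) (snd p)) has_derivative (\<lambda>h. gx \<bullet> fst h + gu \<bullet> snd h))
      (at (y0 + 0 *\<^sub>R dy, v0 + 0 *\<^sub>R dv))" using c_deriv by (simp add: y0_def v0_def)
  from has_derivative_compose[OF line this]
  have "((\<lambda>s. c t (y0 + s *\<^sub>R dy) (v0 + s *\<^sub>R dv)) has_derivative (\<lambda>h. gx \<bullet> (h *\<^sub>R dy) + gu \<bullet> (h *\<^sub>R dv))) (at 0)"
    by simp
  then have "((\<lambda>s. c t (y0 + s *\<^sub>R dy) (v0 + s *\<^sub>R dv)) has_derivative (\<lambda>h. (gx \<bullet> dy + gu \<bullet> dv) * h)) (at 0)"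
    by (rule has_derivative_eq_rhs) (auto simp: algebra_simps fun_eq_iff)
  then show ?thesis
    unfolding has_field_derivative_def fcost_def Fcost_def
      ystate_update_block[OF assms(1)] vinput_update_block[OF assms(1)] y0_def v0_def dy_def dv_def .
qed

text \<open>The row vector through which a unit of input injected \<open>j\<close> steps ago reaches the cost
  gradient \<open>(g\<^sub>x, g\<^sub>u)\<close>, via \<open>y\<close> and via \<open>v = -K y + \<dots>\<close>.\<close>

definition adjoint_row :: "real^'nx \<Rightarrow> real^'nu \<Rightarrow> real^'nx^'nx \<Rightarrow> real^'nu^'nx \<Rightarrow> real^'nx^'nu \<Rightarrow> nat \<Rightarrow> real^'nu"
where
  "adjoint_row gx gu A B K j = gx v* (matpow (A - B ** K) j ** B) - gu v* (K ** (matpow (A - B ** K) j ** B))"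

lemma inner_adjoint_row:
  "adjoint_row gx gu A B K j \<bullet> u
     = gx \<bullet> ((matpow (A - B ** K) j ** B) *v u) - gu \<bullet> (K *v ((matpow (A - B ** K) j ** B) *v u))"
  unfolding adjoint_row_def by (simp add: inner_diff_left dot_lmul_matrix matrix_vector_mul_assoc)

lemma norm_adjoint_row_le:
  "norm (adjoint_row gx gu A B K j) \<le> (norm gx + opnorm K * norm gu) * opnorm (matpow (A - B ** K) j ** B)"
proof -
  define r where "r = adjoint_row gx gu A B K j"
  define Y where "Y = matpow (A - B ** K) j ** B"
  define b where "b = (norm gx + opnorm K * norm gu) * opnorm Y"
  have b0: "0 \<le> b" unfolding b_def by (intro mult_nonneg_nonneg add_nonneg_nonneg opnorm_nonneg) auto
  have "norm r ^ 2 = gx \<bullet> (Y *v r) - gu \<bullet> (K *v (Y *v r))"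
    unfolding power2_norm_eq_inner r_def Y_def inner_adjoint_row ..
  also have "\<dots> \<le> norm gx * norm (Y *v r) + norm gu * norm (K *v (Y *v r))"
    by (smt (verit) Cauchy_Schwarz_ineq2 abs_le_D1 norm_cauchy_schwarz)
  also have "\<dots> \<le> norm gx * norm (Y *v r) + norm gu * (opnorm K * norm (Y *v r))"
    by (intro add_left_mono mult_left_mono norm_matrix_vector_le_opnorm) auto
  also have "\<dots> = (norm gx + opnorm K * norm gu) * norm (Y *v r)" by (simp add: algebra_simps)
  also have "\<dots> \<le> (norm gx + opnorm K * norm gu) * (opnorm Y * norm r)"
    by (intro mult_left_mono norm_matrix_vector_le_opnorm add_nonneg_nonneg mult_nonneg_nonneg opnorm_nonneg) auto
  finally have "norm r ^ 2 \<le> b * norm r" by (simp add: b_def mult_ac)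
  then have "norm r \<le> b" by (cases "norm r = 0") (use b0 in \<open>auto simp: power2_eq_square\<close>)
  then show ?thesis unfolding r_def b_def Y_def .
qed

lemma directional_derivative_eq:
  "gx \<bullet> ystate_dir A B K H i E w t \<omega> + gu \<bullet> vinput_dir A B K H i E w t \<omega> =
   (\<Sum>l\<in>{0..2*H}. \<Sum>j\<in>{0..H}. if l = i + j + 1
      then adjoint_row gx gu A B K j \<bullet> (E *v wext w (int t - 1 - int l) \<omega>) else 0)
   + gu \<bullet> (E *v wext w (int t - int (Suc i)) \<omega>)"
proof -
  have "ystate_dir A B K H i E w t \<omega> = (\<Sum>l\<in>{0..2*H}. \<Sum>j\<in>{0..H}. if l = i + j + 1
      then (matpow (A - B ** K) j ** B) *v (E *v wext w (int t - 1 - int l) \<omega>) else 0)"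
    unfolding ystate_dir_def Psi_dir_def matrix_vector_mult_sum_left
    by (intro sum.cong refl) (simp add: matrix_vector_mul_assoc)
  then show ?thesis
    unfolding vinput_dir_def
    by (simp add: inner_sum_right inner_add_right matrix_vector_mult_sum_right if_distrib inner_adjoint_row
         sum_subtractf[symmetric] inner_diff_right cong: if_cong)
qed

definition outer :: "real^'a \<Rightarrow> real^'b \<Rightarrow> real^'b^'a" where
  "outer p z = (\<chi> a b. p$a * z$b)"

lemma norm_outer: "norm (outer p z) = norm p * norm z"
proof -
  have "outer p z $ a = p$a *\<^sub>R z" for a by (simp add: outer_def vec_eq_iff)
  then have "norm (outer p z) = L2_set (\<lambda>a. \<bar>p$a\<bar> * norm z) UNIV"
    unfolding norm_vec_def[of "outer p z"] by simp
  also have "\<dots> = norm p * norm z" by (simp add: L2_set_left_distrib norm_vec_def)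
  finally show ?thesis .
qed

lemma inner_munit_matrix_vector: "r \<bullet> (munit a b *v x) = r$a * x$b"
proof -
  have "munit a b *v x = (\<chi> i. if i = a then x$b else 0)"
    by (simp add: munit_def matrix_vector_mult_def vec_eq_iff if_distrib if_distribR cong: if_cong)
  then show ?thesis unfolding inner_vec_def by (simp add: if_distrib if_distribR cong: if_cong)
qed

text \<open>The left-hand side is the squared Frobenius norm of
  \<open>\<Sum> r\<^sub>j x\<^sub>l\<^sup>T + g x'\<^sup>T\<close>; bound it by the triangle inequality.\<close>

lemma sum_sq_inner_munit_le:
  fixes r :: "nat \<Rightarrow> real^'nu" and x :: "nat \<Rightarrow> real^'nx" and g :: "real^'nu"
  shows "(\<Sum>a\<in>(UNIV::'nu set). \<Sum>b\<in>(UNIV::'nx set).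
     ((\<Sum>l\<in>L. \<Sum>j\<in>J. if P l j then r j \<bullet> (munit a b *v x l) else 0) + g \<bullet> (munit a b *v x'))^2)
   \<le> ((\<Sum>l\<in>L. \<Sum>j\<in>J. if P l j then norm (r j) * norm (x l) else 0) + norm g * norm x')^2"
proof -
  define G where "G = (\<Sum>l\<in>L. \<Sum>j\<in>J. if P l j then outer (r j) (x l) else 0) + outer g x'"
  have G_entry: "G $ a $ b = (\<Sum>l\<in>L. \<Sum>j\<in>J. if P l j then r j \<bullet> (munit a b *v x l) else 0)
                              + g \<bullet> (munit a b *v x')" for a b
    unfolding G_def inner_munit_matrix_vector by (auto simp: outer_def intro!: sum.cong)
  have "norm G \<le> norm (\<Sum>l\<in>L. \<Sum>j\<in>J. if P l j then outer (r j) (x l) else 0) + norm (outer g x')"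
    unfolding G_def by (rule norm_triangle_ineq)
  also have "norm (\<Sum>l\<in>L. \<Sum>j\<in>J. if P l j then outer (r j) (x l) else 0)
               \<le> (\<Sum>l\<in>L. \<Sum>j\<in>J. norm (if P l j then outer (r j) (x l) else 0))"
    by (rule order_trans[OF norm_sum]) (intro sum_mono norm_sum)
  finally have "norm G \<le> (\<Sum>l\<in>L. \<Sum>j\<in>J. if P l j then norm (r j) * norm (x l) else 0) + norm g * norm x'"
    by (simp add: norm_outer if_distrib cong: if_cong)
  then have "norm G ^ 2 \<le> ((\<Sum>l\<in>L. \<Sum>j\<in>J. if P l j then norm (r j) * norm (x l) else 0) + norm g * norm x')^2"
    by (rule power_mono) simp
  moreover have "norm G ^ 2 = (\<Sum>a\<in>(UNIV::'nu set). \<Sum>b\<in>(UNIV::'nx set). (G$a$b)^2)"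
    unfolding norm_vec_def L2_set_def by (simp add: sum_nonneg)
  ultimately show ?thesis unfolding G_entry by simp
qed

section \<open>Elementary sums and inequalities\<close>

lemma sum_power2_le_power2_sum:
  "(\<And>i. i \<in> S \<Longrightarrow> 0 \<le> f i) \<Longrightarrow> (\<Sum>i\<in>S. (f i)^2) \<le> (\<Sum>i\<in>S. f i :: real)^2"
proof (induction S rule: infinite_finite_induct)
  case (insert x F)
  then have "(f x)^2 + (sum f F)^2 \<le> (f x + sum f F)^2" by (simp add: power2_sum sum_nonneg)
  then show ?case using insert by simp
qed auto

lemma sum_power_le_inverse_one_minus:
  fixes \<rho> :: real
  assumes "0 \<le> \<rho>" "\<rho> < 1" "finite S"
  shows "(\<Sum>l\<in>S. \<rho>^l) \<le> 1 / (1 - \<rho>)"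
proof -
  obtain N where "S \<subseteq> {..<N}" using assms(3) finite_nat_bounded by auto
  then have "(\<Sum>l\<in>S. \<rho>^l) \<le> (\<Sum>l<N. \<rho>^l)" using assms by (intro sum_mono2) auto
  also have "\<dots> = (1 - \<rho>^N) / (1 - \<rho>)" using assms by (simp add: sum_gp_strict)
  also have "\<dots> \<le> 1 / (1 - \<rho>)" using assms by (intro divide_right_mono) auto
  finally show ?thesis .
qed

lemma sum_shifted_power_le:
  fixes \<rho> :: real
  assumes "0 \<le> \<rho>" "\<rho> < 1" "finite S"
  shows "(\<Sum>l\<in>S. if j < l then \<rho>^(l - j - 1) else 0) \<le> 1 / (1 - \<rho>)"
proof -
  define S' where "S' = {l\<in>S. j < l}"
  have "(\<Sum>l\<in>S. if j < l then \<rho>^(l - j - 1) else 0) = (\<Sum>l\<in>S'. \<rho>^(l - j - 1))"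
    unfolding S'_def using assms(3) by (rule sum.inter_filter[symmetric])
  also have "\<dots> = (\<Sum>m\<in>(\<lambda>l. l - j - 1) ` S'. \<rho>^m)"
    by (rule sum.reindex_cong[symmetric]) (auto simp: S'_def inj_on_def)
  also have "\<dots> \<le> 1 / (1 - \<rho>)"
    using assms by (intro sum_power_le_inverse_one_minus) (auto simp: S'_def)
  finally show ?thesis .
qed

lemma weighted_sum_power2_le:
  fixes \<alpha> u :: "'a \<Rightarrow> real"
  assumes "\<And>l. l \<in> S \<Longrightarrow> 0 \<le> \<alpha> l"
  shows "(\<Sum>l\<in>S. \<alpha> l * u l)^2 \<le> (\<Sum>l\<in>S. \<alpha> l) * (\<Sum>l\<in>S. \<alpha> l * (u l)^2)"
proof -
  have "(\<Sum>l\<in>S. \<alpha> l * u l) = (\<Sum>l\<in>S. sqrt (\<alpha> l) * (sqrt (\<alpha> l) * u l))"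
    using assms by (intro sum.cong) (auto simp: mult.assoc[symmetric])
  also have "(\<dots>)^2 \<le> (\<Sum>l\<in>S. (sqrt (\<alpha> l))^2) * (\<Sum>l\<in>S. (sqrt (\<alpha> l) * u l)^2)"
    by (rule Cauchy_Schwarz_ineq_sum)
  also have "\<dots> = (\<Sum>l\<in>S. \<alpha> l) * (\<Sum>l\<in>S. \<alpha> l * (u l)^2)"
    using assms by (intro arg_cong2[where f="(*)"] sum.cong) (auto simp: power_mult_distrib)
  finally show ?thesis .
qed

lemma weighted_sum_power4_le:
  fixes \<alpha> u :: "'a \<Rightarrow> real"
  assumes "\<And>l. l \<in> S \<Longrightarrow> 0 \<le> \<alpha> l"
  shows "(\<Sum>l\<in>S. \<alpha> l * u l)^4 \<le> (\<Sum>l\<in>S. \<alpha> l)^3 * (\<Sum>l\<in>S. \<alpha> l * (u l)^4)"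
proof -
  have "(\<Sum>l\<in>S. \<alpha> l * u l)^4 = ((\<Sum>l\<in>S. \<alpha> l * u l)^2)^2" by simp
  also have "\<dots> \<le> ((\<Sum>l\<in>S. \<alpha> l) * (\<Sum>l\<in>S. \<alpha> l * (u l)^2))^2"
    using weighted_sum_power2_le[OF assms] by (intro power_mono) auto
  also have "\<dots> = (\<Sum>l\<in>S. \<alpha> l)^2 * (\<Sum>l\<in>S. \<alpha> l * (u l)^2)^2" by (simp add: power_mult_distrib)
  also have "\<dots> \<le> (\<Sum>l\<in>S. \<alpha> l)^2 * ((\<Sum>l\<in>S. \<alpha> l) * (\<Sum>l\<in>S. \<alpha> l * ((u l)^2)^2))"
    using weighted_sum_power2_le[OF assms, where u="\<lambda>l. (u l)^2"] by (intro mult_left_mono) auto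
  also have "\<dots> = (\<Sum>l\<in>S. \<alpha> l)^3 * (\<Sum>l\<in>S. \<alpha> l * (u l)^4)"
    unfolding power_mult[symmetric] by (simp add: power2_eq_square power3_eq_cube)
  finally show ?thesis .
qed

lemma mult_le_scaled_squares: "0 < p \<Longrightarrow> a * b \<le> (p * a^2 + b^2 / p) / (2::real)"
proof -
  assume p: "0 < p"
  have "0 \<le> (p * a - b)^2" by simp
  then have "2 * p * (a * b) \<le> p^2 * a^2 + b^2" by (simp add: power2_diff power_mult_distrib algebra_simps)
  then show ?thesis using p by (simp add: field_simps power2_eq_square)
qed

text \<open>AM-GM with the scale \<open>V\<^sub>2/V\<^sub>1\<close> (squared in the quartic case), then Jensen for each sum.\<close>

lemma weighted_sums_product_le:
  fixes \<alpha> \<beta> u :: "'a \<Rightarrow> real"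
  assumes \<alpha>: "\<And>l. l \<in> S \<Longrightarrow> 0 \<le> \<alpha> l" and \<beta>: "\<And>l. l \<in> S \<Longrightarrow> 0 \<le> \<beta> l"
    and sum_\<alpha>: "(\<Sum>l\<in>S. \<alpha> l) \<le> V1" and sum_\<beta>: "(\<Sum>l\<in>S. \<beta> l) \<le> V2" and "0 < V1" "0 < V2"
  shows "(\<Sum>l\<in>S. \<alpha> l * u l) * (\<Sum>l\<in>S. \<beta> l * u l)
     \<le> (V2 * (\<Sum>l\<in>S. \<alpha> l * (u l)^2) + V1 * (\<Sum>l\<in>S. \<beta> l * (u l)^2)) / 2"
proof -
  define X Z where "X = (\<Sum>l\<in>S. \<alpha> l * u l)" and "Z = (\<Sum>l\<in>S. \<beta> l * u l)"
  have p: "0 < V2 / V1" using assms by simp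
  have X2: "X^2 \<le> V1 * (\<Sum>l\<in>S. \<alpha> l * (u l)^2)"
    unfolding X_def using weighted_sum_power2_le[OF \<alpha>, where u=u] sum_\<alpha> \<alpha>
    by (meson order_trans mult_right_mono sum_nonneg zero_le_power2 mult_nonneg_nonneg)
  have Z2: "Z^2 \<le> V2 * (\<Sum>l\<in>S. \<beta> l * (u l)^2)"
    unfolding Z_def using weighted_sum_power2_le[OF \<beta>, where u=u] sum_\<beta> \<beta>
    by (meson order_trans mult_right_mono sum_nonneg zero_le_power2 mult_nonneg_nonneg)
  have "X * Z \<le> (V2 / V1 * X^2 + Z^2 / (V2 / V1)) / 2" by (rule mult_le_scaled_squares[OF p])
  also have "\<dots> \<le> (V2 / V1 * (V1 * (\<Sum>l\<in>S. \<alpha> l * (u l)^2)) + (V2 * (\<Sum>l\<in>S. \<beta> l * (u l)^2)) / (V2 / V1)) / 2"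
    using X2 Z2 p by (intro divide_right_mono add_mono mult_left_mono) auto
  also have "\<dots> = (V2 * (\<Sum>l\<in>S. \<alpha> l * (u l)^2) + V1 * (\<Sum>l\<in>S. \<beta> l * (u l)^2)) / 2"
    using assms by (simp add: field_simps)
  finally show ?thesis unfolding X_def Z_def .
qed

lemma weighted_sums_product_sq_le:
  fixes \<alpha> \<beta> u :: "'a \<Rightarrow> real"
  assumes \<alpha>: "\<And>l. l \<in> S \<Longrightarrow> 0 \<le> \<alpha> l" and \<beta>: "\<And>l. l \<in> S \<Longrightarrow> 0 \<le> \<beta> l"
    and sum_\<alpha>: "(\<Sum>l\<in>S. \<alpha> l) \<le> V1" and sum_\<beta>: "(\<Sum>l\<in>S. \<beta> l) \<le> V2" and "0 < V1" "0 < V2"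
  shows "(\<Sum>l\<in>S. \<alpha> l * u l)^2 * (\<Sum>l\<in>S. \<beta> l * u l)^2
     \<le> (V2^2 * V1 * (\<Sum>l\<in>S. \<alpha> l * (u l)^4) + V1^2 * V2 * (\<Sum>l\<in>S. \<beta> l * (u l)^4)) / 2"
proof -
  define X Z where "X = (\<Sum>l\<in>S. \<alpha> l * u l)" and "Z = (\<Sum>l\<in>S. \<beta> l * u l)"
  have p: "0 < V2^2 / V1^2" using assms by simp
  have "0 \<le> (\<Sum>l\<in>S. \<alpha> l * (u l)^4)" "0 \<le> (\<Sum>l\<in>S. \<beta> l * (u l)^4)"
    using \<alpha> \<beta> by (auto intro!: sum_nonneg simp: zero_le_even_power)
  then have X4: "X^4 \<le> V1^3 * (\<Sum>l\<in>S. \<alpha> l * (u l)^4)"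
    and Z4: "Z^4 \<le> V2^3 * (\<Sum>l\<in>S. \<beta> l * (u l)^4)"
    unfolding X_def Z_def using weighted_sum_power4_le[OF \<alpha>, where u=u] weighted_sum_power4_le[OF \<beta>, where u=u]
      sum_\<alpha> sum_\<beta> \<alpha> \<beta>
    by (meson order_trans mult_right_mono power_mono sum_nonneg)+
  have "X^2 * Z^2 \<le> (V2^2 / V1^2 * X^4 + Z^4 / (V2^2 / V1^2)) / 2"
    using mult_le_scaled_squares[OF p, of "X^2" "Z^2"] by (simp flip: power_mult)
  also have "\<dots> \<le> (V2^2 / V1^2 * (V1^3 * (\<Sum>l\<in>S. \<alpha> l * (u l)^4))
                   + (V2^3 * (\<Sum>l\<in>S. \<beta> l * (u l)^4)) / (V2^2 / V1^2)) / 2"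
    using X4 Z4 p by (intro divide_right_mono add_mono mult_left_mono) auto
  also have "\<dots> = (V2^2 * V1 * (\<Sum>l\<in>S. \<alpha> l * (u l)^4) + V1^2 * V2 * (\<Sum>l\<in>S. \<beta> l * (u l)^4)) / 2"
    using assms by (simp add: field_simps power2_eq_square power3_eq_cube)
  finally show ?thesis unfolding X_def Z_def .
qed

lemma sum_lagged_const_le:
  fixes c :: real
  assumes "0 \<le> c"
  shows "(\<Sum>t<T. \<Sum>i\<in>{1..min (H + 1) t}. \<Sum>k\<in>{1..i}. c) \<le> real T * (real H + 1)^2 * c"
proof -
  have "(\<Sum>i\<in>{1..min (H + 1) t}. \<Sum>k\<in>{1..i}. c) \<le> (real H + 1)^2 * c" for t
  proof -
    have "(\<Sum>i\<in>{1..min (H + 1) t}. \<Sum>k\<in>{1..i}. c) = (\<Sum>i\<in>{1..min (H + 1) t}. real i * c)" by simp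
    also have "\<dots> \<le> (\<Sum>i\<in>{1..min (H + 1) t}. (real H + 1) * c)"
      using assms by (intro sum_mono mult_right_mono) auto
    also have "\<dots> = real (min (H + 1) t) * ((real H + 1) * c)" by simp
    also have "\<dots> \<le> (real H + 1) * ((real H + 1) * c)"
      using assms by (intro mult_right_mono) auto
    finally show ?thesis by (simp add: power2_eq_square mult_ac)
  qed
  then have "(\<Sum>t<T. \<Sum>i\<in>{1..min (H + 1) t}. \<Sum>k\<in>{1..i}. c) \<le> (\<Sum>t<T. (real H + 1)^2 * c)"
    by (intro sum_mono)
  then show ?thesis by simp
qed

section \<open>Bounds for a stable time-invariant policy\<close>

definition noise_norm :: "(nat \<Rightarrow> 'w \<Rightarrow> real^'nx) \<Rightarrow> nat \<Rightarrow> 'w \<Rightarrow> nat \<Rightarrow> real" where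
  "noise_norm w t \<omega> l = norm (wext w (int t - 1 - int l) \<omega>)"

locale stable_policy =
  fixes A :: "real^'nx^'nx" and B :: "real^'nu^'nx" and K :: "real^'nx^'nu"
    and M :: "nat \<Rightarrow> real^'nx^'nu" and H :: nat and \<kappa> \<gamma> \<kappa>B :: real
  assumes gamma_pos: "0 < \<gamma>" and gamma_less_1: "\<gamma> < 1"
    and kappa_ge_1: "1 \<le> \<kappa>" and kappaB_ge_1: "1 \<le> \<kappa>B"
    and opnorm_K_le: "opnorm K \<le> \<kappa>"
    and opnorm_AK_pow_le: "opnorm (matpow (A - B ** K) j) \<le> \<kappa>^2 * (1-\<gamma>)^j"
    and opnorm_B_le: "opnorm B \<le> \<kappa>B"
    and opnorm_M_le: "m < H \<Longrightarrow> opnorm (M m) \<le> 2 * \<kappa>B * \<kappa>^3 * (1-\<gamma>)^m"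
begin

text \<open>Weights of the lagged noise norms \<open>\<parallel>w\<^sub>t\<^sub>-\<^sub>1\<^sub>-\<^sub>l\<parallel>\<close> in bounds for \<open>\<Psi>\<close>, for \<open>M\<close>, for
  \<open>\<parallel>y\<^sub>t\<parallel> + \<kappa>\<parallel>v\<^sub>t\<parallel>\<close>, and for the partial derivatives in block \<open>i\<close>.\<close>

definition Psi_weight :: "nat \<Rightarrow> real" where
  "Psi_weight l = (if l \<le> H then \<kappa>^2 * (1-\<gamma>)^l else 0) +
     (\<Sum>j\<in>{0..H}. if 1 \<le> int l - int j \<and> int l - int j \<le> int H
                   then \<kappa>^2 * (1-\<gamma>)^j * \<kappa>B * (2 * \<kappa>B * \<kappa>^3 * (1-\<gamma>)^(l - j - 1)) else 0)"

definition M_weight :: "nat \<Rightarrow> real" where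
  "M_weight l = (if l < H then 2 * \<kappa>B * \<kappa>^3 * (1-\<gamma>)^l else 0)"

definition yv_weight :: "nat \<Rightarrow> real" where
  "yv_weight l = (1 + \<kappa>^2) * Psi_weight l + \<kappa> * M_weight l"

definition block_weight :: "nat \<Rightarrow> nat \<Rightarrow> real" where
  "block_weight i l = (\<Sum>j\<in>{0..H}. if l = i + j + 1 then \<kappa>^2 * (1-\<gamma>)^j * \<kappa>B else 0)
                      + (if l = i then 1 else 0)"

lemma one_minus_gamma_nonneg: "0 \<le> 1 - \<gamma>"
  using gamma_less_1 by simp

lemma Psi_weight_nonneg: "0 \<le> Psi_weight l"
  unfolding Psi_weight_def using one_minus_gamma_nonneg kappa_ge_1 kappaB_ge_1
  by (intro add_nonneg_nonneg sum_nonneg) auto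

lemma yv_weight_nonneg: "0 \<le> yv_weight l"
  unfolding yv_weight_def M_weight_def using Psi_weight_nonneg one_minus_gamma_nonneg kappa_ge_1 kappaB_ge_1
  by (intro add_nonneg_nonneg mult_nonneg_nonneg) auto

lemma block_weight_nonneg: "0 \<le> block_weight i l"
  unfolding block_weight_def using one_minus_gamma_nonneg kappaB_ge_1
  by (intro add_nonneg_nonneg sum_nonneg) auto

lemma opnorm_AK_pow_B_le: "opnorm (matpow (A - B ** K) j ** B) \<le> \<kappa>^2 * (1-\<gamma>)^j * \<kappa>B"
  using opnorm_matrix_mult_le[of "matpow (A - B ** K) j" B] opnorm_AK_pow_le[of j] opnorm_B_le
  by (smt (verit, best) mult_mono opnorm_nonneg)

lemma opnorm_Psi_le: "opnorm (Psi A B K H H (\<lambda>_. M) \<tau> l) \<le> Psi_weight l"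
proof -
  have head: "opnorm (if l \<le> H then matpow (A - B ** K) l else 0) \<le> (if l \<le> H then \<kappa>^2 * (1-\<gamma>)^l else 0)"
    using opnorm_AK_pow_le by simp
  have tail: "opnorm (if 1 \<le> int l - int j \<and> int l - int j \<le> int H then matpow (A - B ** K) j ** B ** M (l - j - 1) else 0)
     \<le> (if 1 \<le> int l - int j \<and> int l - int j \<le> int H
         then \<kappa>^2 * (1-\<gamma>)^j * \<kappa>B * (2 * \<kappa>B * \<kappa>^3 * (1-\<gamma>)^(l - j - 1)) else 0)" for j
  proof (cases "1 \<le> int l - int j \<and> int l - int j \<le> int H")
    case True
    then have "opnorm (M (l - j - 1)) \<le> 2 * \<kappa>B * \<kappa>^3 * (1-\<gamma>)^(l - j - 1)"
      by (intro opnorm_M_le) linarith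
    moreover have "opnorm (matpow (A - B ** K) j ** B ** M (l - j - 1))
                     \<le> opnorm (matpow (A - B ** K) j ** B) * opnorm (M (l - j - 1))"
      by (rule opnorm_matrix_mult_le)
    ultimately show ?thesis using True opnorm_AK_pow_B_le[of j]
      by (smt (verit, best) mult_mono opnorm_nonneg)
  next
    case False
    then show ?thesis by (subst (1 2) if_not_P) simp_all
  qed
  show ?thesis unfolding Psi_def Psi_weight_def
    by (rule order_trans[OF opnorm_add_le], rule add_mono[OF head],
        rule order_trans[OF opnorm_sum_le], rule sum_mono, rule tail)
qed

lemma norm_ystate_le:
  "norm (ystate A B K H (\<lambda>_. M) w t \<omega>) \<le> (\<Sum>l\<in>{0..2*H}. Psi_weight l * noise_norm w t \<omega> l)"
  unfolding ystate_def noise_norm_def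
  by (rule order_trans[OF norm_sum], rule sum_mono, rule order_trans[OF norm_matrix_vector_le_opnorm],
      rule mult_right_mono[OF opnorm_Psi_le], simp)

lemma norm_vinput_le:
  "norm (vinput A B K H (\<lambda>_. M) w t \<omega>)
     \<le> \<kappa> * norm (ystate A B K H (\<lambda>_. M) w t \<omega>) + (\<Sum>l\<in>{0..2*H}. M_weight l * noise_norm w t \<omega> l)"
proof -
  have "norm (\<Sum>i\<in>{1..H}. M (i - 1) *v wext w (int t - int i) \<omega>)
          \<le> (\<Sum>i\<in>{1..H}. 2 * \<kappa>B * \<kappa>^3 * (1-\<gamma>)^(i-1) * noise_norm w t \<omega> (i - 1))"
  proof (rule order_trans[OF norm_sum], rule sum_mono)
    fix i assume i: "i \<in> {1..H}"
    then have "norm (M (i - 1) *v wext w (int t - int i) \<omega>) \<le> opnorm (M (i - 1)) * noise_norm w t \<omega> (i - 1)"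
      unfolding noise_norm_def using norm_matrix_vector_le_opnorm by (simp add: algebra_simps of_nat_diff)
    also have "\<dots> \<le> 2 * \<kappa>B * \<kappa>^3 * (1-\<gamma>)^(i-1) * noise_norm w t \<omega> (i - 1)"
      using i by (intro mult_right_mono opnorm_M_le) (auto simp: noise_norm_def)
    finally show "norm (M (i - 1) *v wext w (int t - int i) \<omega>)
                    \<le> 2 * \<kappa>B * \<kappa>^3 * (1-\<gamma>)^(i-1) * noise_norm w t \<omega> (i - 1)" .
  qed
  also have "\<dots> = (\<Sum>l<H. 2 * \<kappa>B * \<kappa>^3 * (1-\<gamma>)^l * noise_norm w t \<omega> l)"
    using sum.atLeast1_atMost_eq[of "\<lambda>i. 2 * \<kappa>B * \<kappa>^3 * (1-\<gamma>)^(i-1) * noise_norm w t \<omega> (i - 1)" H]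
    by simp
  also have "\<dots> = (\<Sum>l\<in>{0..2*H} \<inter> {..<H}. 2 * \<kappa>B * \<kappa>^3 * (1-\<gamma>)^l * noise_norm w t \<omega> l)"
    by (simp add: Int_absorb1 subset_eq)
  also have "\<dots> = (\<Sum>l\<in>{0..2*H}. M_weight l * noise_norm w t \<omega> l)"
    unfolding sum.inter_restrict[OF finite_atLeastAtMost] by (rule sum.cong) (auto simp: M_weight_def)
  finally have sum_M: "norm (\<Sum>i\<in>{1..H}. M (i - 1) *v wext w (int t - int i) \<omega>)
                         \<le> (\<Sum>l\<in>{0..2*H}. M_weight l * noise_norm w t \<omega> l)" .
  have "norm (K *v ystate A B K H (\<lambda>_. M) w t \<omega>) \<le> \<kappa> * norm (ystate A B K H (\<lambda>_. M) w t \<omega>)"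
    by (rule order_trans[OF norm_matrix_vector_le_opnorm], rule mult_right_mono[OF opnorm_K_le], simp)
  moreover have "norm (vinput A B K H (\<lambda>_. M) w t \<omega>) \<le> norm (K *v ystate A B K H (\<lambda>_. M) w t \<omega>)
      + norm (\<Sum>i\<in>{1..H}. M (i - 1) *v wext w (int t - int i) \<omega>)"
    unfolding vinput_def by (rule order_trans[OF norm_triangle_ineq]) simp
  ultimately show ?thesis using sum_M by linarith
qed

lemma norm_ystate_vinput_le:
  "norm (ystate A B K H (\<lambda>_. M) w t \<omega>) + \<kappa> * norm (vinput A B K H (\<lambda>_. M) w t \<omega>)
     \<le> (\<Sum>l\<in>{0..2*H}. yv_weight l * noise_norm w t \<omega> l)"
proof -
  define y where "y = norm (ystate A B K H (\<lambda>_. M) w t \<omega>)"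
  define Sp where "Sp = (\<Sum>l\<in>{0..2*H}. Psi_weight l * noise_norm w t \<omega> l)"
  define Sm where "Sm = (\<Sum>l\<in>{0..2*H}. M_weight l * noise_norm w t \<omega> l)"
  have "y + \<kappa> * norm (vinput A B K H (\<lambda>_. M) w t \<omega>) \<le> y + \<kappa> * (\<kappa> * y + Sm)"
    using norm_vinput_le kappa_ge_1 unfolding y_def Sm_def by (intro add_left_mono mult_left_mono) auto
  also have "\<dots> = (1 + \<kappa>^2) * y + \<kappa> * Sm" by (simp add: algebra_simps power2_eq_square)
  also have "\<dots> \<le> (1 + \<kappa>^2) * Sp + \<kappa> * Sm"
    using norm_ystate_le unfolding y_def Sp_def by (intro add_right_mono mult_left_mono) auto
  also have "\<dots> = (\<Sum>l\<in>{0..2*H}. yv_weight l * noise_norm w t \<omega> l)"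
    unfolding Sp_def Sm_def yv_weight_def by (simp add: sum_distrib_left sum.distrib algebra_simps)
  finally show ?thesis unfolding y_def .
qed

end

lemma stable_policy_if_strongly_stable:
  assumes "strongly_stable A B K \<kappa> \<gamma>" "0 < \<gamma>" "\<gamma> < 1" "M \<in> Mset H (max (opnorm B) 1) \<kappa> \<gamma>"
  shows "stable_policy A B K M H \<kappa> \<gamma> (max (opnorm B) 1)"
  using strongly_stableD[OF assms(1,3)] assms(2-4) unfolding Mset_def by unfold_locales auto

context stable_policy
begin

lemma sum_Psi_weight_le:
  "(\<Sum>l\<in>{0..2*H}. Psi_weight l) \<le> \<kappa>^2 / \<gamma> + 2 * \<kappa>B^2 * \<kappa>^5 / \<gamma>^2"
proof -
  define \<rho> where "\<rho> = 1 - \<gamma>"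
  have \<rho>: "0 \<le> \<rho>" "\<rho> < 1" "1 - \<rho> = \<gamma>" using gamma_pos gamma_less_1 by (auto simp: \<rho>_def)
  have head: "(\<Sum>l\<in>{0..2*H}. if l \<le> H then \<kappa>^2 * \<rho>^l else 0) \<le> \<kappa>^2 / \<gamma>"
  proof -
    have "(\<Sum>l\<in>{0..2*H}. if l \<le> H then \<kappa>^2 * \<rho>^l else 0) \<le> \<kappa>^2 * (\<Sum>l\<in>{0..2*H}. \<rho>^l)"
      unfolding sum_distrib_left using \<rho> by (intro sum_mono) auto
    also have "\<dots> \<le> \<kappa>^2 * (1 / (1 - \<rho>))"
      using \<rho> by (intro mult_left_mono sum_power_le_inverse_one_minus) auto
    finally show ?thesis using \<rho> by simp
  qed
  have "(\<Sum>l\<in>{0..2*H}. \<Sum>j\<in>{0..H}. if 1 \<le> int l - int j \<and> int l - int j \<le> int H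
            then \<kappa>^2 * \<rho>^j * \<kappa>B * (2 * \<kappa>B * \<kappa>^3 * \<rho>^(l - j - 1)) else 0)
       \<le> (\<Sum>l\<in>{0..2*H}. \<Sum>j\<in>{0..H}. (2 * \<kappa>B^2 * \<kappa>^5) * \<rho>^j * (if j < l then \<rho>^(l - j - 1) else 0))"
    using \<rho> kappa_ge_1 kappaB_ge_1
    by (intro sum_mono) (auto simp: power2_eq_square power_numeral_reduce mult_ac)
  also have "\<dots> = (\<Sum>j\<in>{0..H}. (2 * \<kappa>B^2 * \<kappa>^5) * \<rho>^j * (\<Sum>l\<in>{0..2*H}. if j < l then \<rho>^(l - j - 1) else 0))"
    by (subst sum.swap) (simp add: sum_distrib_left)
  also have "\<dots> \<le> (\<Sum>j\<in>{0..H}. (2 * \<kappa>B^2 * \<kappa>^5) * \<rho>^j * (1 / \<gamma>))"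
    using \<rho> sum_shifted_power_le[of \<rho>] kappa_ge_1 by (intro sum_mono mult_left_mono) auto
  also have "\<dots> = (2 * \<kappa>B^2 * \<kappa>^5 / \<gamma>) * (\<Sum>j\<in>{0..H}. \<rho>^j)"
    by (simp add: sum_distrib_left sum_distrib_right sum_divide_distrib[symmetric] mult_ac)
  also have "\<dots> \<le> (2 * \<kappa>B^2 * \<kappa>^5 / \<gamma>) * (1 / (1 - \<rho>))"
    using \<rho> gamma_pos kappa_ge_1 by (intro mult_left_mono sum_power_le_inverse_one_minus) auto
  finally have tail: "(\<Sum>l\<in>{0..2*H}. \<Sum>j\<in>{0..H}. if 1 \<le> int l - int j \<and> int l - int j \<le> int H
            then \<kappa>^2 * \<rho>^j * \<kappa>B * (2 * \<kappa>B * \<kappa>^3 * \<rho>^(l - j - 1)) else 0)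
       \<le> 2 * \<kappa>B^2 * \<kappa>^5 / \<gamma>^2"
    using \<rho> by (simp add: power2_eq_square)
  show ?thesis unfolding Psi_weight_def sum.distrib using head tail unfolding \<rho>_def by linarith
qed

lemma sum_M_weight_le: "(\<Sum>l\<in>{0..2*H}. M_weight l) \<le> 2 * \<kappa>B * \<kappa>^3 / \<gamma>"
proof -
  have "(\<Sum>l\<in>{0..2*H}. M_weight l) \<le> 2 * \<kappa>B * \<kappa>^3 * (\<Sum>l\<in>{0..2*H}. (1-\<gamma>)^l)"
    unfolding M_weight_def sum_distrib_left using gamma_less_1 kappa_ge_1 kappaB_ge_1 by (intro sum_mono) auto
  also have "\<dots> \<le> 2 * \<kappa>B * \<kappa>^3 * (1 / (1 - (1 - \<gamma>)))"
    using gamma_pos gamma_less_1 kappa_ge_1 kappaB_ge_1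
    by (intro mult_left_mono sum_power_le_inverse_one_minus) auto
  finally show ?thesis by simp
qed

lemma sum_yv_weight_le: "(\<Sum>l\<in>{0..2*H}. yv_weight l) \<le> 8 * \<kappa>B^2 * \<kappa>^7 / \<gamma>^2"
proof -
  define P where "P = \<kappa>B^2 * \<kappa>^5 / \<gamma>^2"
  have k: "1 \<le> \<kappa>" "1 \<le> \<kappa>B" "1 \<le> \<kappa>B^2" "\<kappa>^2 \<le> \<kappa>^5" "\<kappa>B \<le> \<kappa>B^2" "\<kappa>^4 \<le> \<kappa>^7"
    using kappa_ge_1 kappaB_ge_1 power_increasing[of 2 5 \<kappa>] power_increasing[of 4 7 \<kappa>]
      mult_mono[of 1 \<kappa>B 1 \<kappa>B] by (auto simp: power2_eq_square)
  have g: "1 / \<gamma> \<le> 1 / \<gamma>^2" "0 < \<gamma>"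
    using gamma_pos gamma_less_1 by (auto simp: power2_eq_square field_simps)
  have "\<kappa>^2 * (1 / \<gamma>) \<le> (\<kappa>B^2 * \<kappa>^5) * (1 / \<gamma>^2)"
    using k g by (intro mult_mono) (auto intro: order_trans[OF _ mult_right_mono[of 1 "\<kappa>B^2"]])
  then have "\<kappa>^2 / \<gamma> + 2 * \<kappa>B^2 * \<kappa>^5 / \<gamma>^2 \<le> 3 * P" by (simp add: P_def)
  moreover have "1 + \<kappa>^2 \<le> 2 * \<kappa>^2" using k by (simp add: one_le_power)
  ultimately have "(1 + \<kappa>^2) * (\<kappa>^2 / \<gamma> + 2 * \<kappa>B^2 * \<kappa>^5 / \<gamma>^2) \<le> (2 * \<kappa>^2) * (3 * P)"
    using g k by (intro mult_mono) auto
  also have "\<dots> = 6 * \<kappa>B^2 * \<kappa>^7 / \<gamma>^2"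
    unfolding P_def using power_add[of \<kappa> 2 5] by simp
  finally have psi_part: "(1 + \<kappa>^2) * (\<kappa>^2 / \<gamma> + 2 * \<kappa>B^2 * \<kappa>^5 / \<gamma>^2) \<le> 6 * \<kappa>B^2 * \<kappa>^7 / \<gamma>^2" .
  have "\<kappa> * (2 * \<kappa>B * \<kappa>^3 / \<gamma>) = 2 * (\<kappa>B * \<kappa>^4) * (1 / \<gamma>)"
    by (simp add: power_numeral_reduce)
  also have "\<dots> \<le> 2 * (\<kappa>B^2 * \<kappa>^7) * (1 / \<gamma>^2)" using k g by (intro mult_mono) auto
  finally have M_part: "\<kappa> * (2 * \<kappa>B * \<kappa>^3 / \<gamma>) \<le> 2 * \<kappa>B^2 * \<kappa>^7 / \<gamma>^2" by simp
  have "(\<Sum>l\<in>{0..2*H}. yv_weight l)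
        = (1 + \<kappa>^2) * (\<Sum>l\<in>{0..2*H}. Psi_weight l) + \<kappa> * (\<Sum>l\<in>{0..2*H}. M_weight l)"
    unfolding yv_weight_def by (simp add: sum.distrib sum_distrib_left)
  also have "\<dots> \<le> (1 + \<kappa>^2) * (\<kappa>^2 / \<gamma> + 2 * \<kappa>B^2 * \<kappa>^5 / \<gamma>^2) + \<kappa> * (2 * \<kappa>B * \<kappa>^3 / \<gamma>)"
    using sum_Psi_weight_le sum_M_weight_le kappa_ge_1 by (intro add_mono mult_left_mono) auto
  also have "\<dots> \<le> 8 * \<kappa>B^2 * \<kappa>^7 / \<gamma>^2"
    using psi_part M_part by simp
  finally show ?thesis .
qed

lemma sum_block_weight_le: "(\<Sum>l\<in>{0..2*H}. block_weight i l) \<le> 2 * \<kappa>^2 * \<kappa>B / \<gamma>"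
proof -
  have "(\<Sum>l\<in>{0..2*H}. \<Sum>j\<in>{0..H}. if l = i + j + 1 then \<kappa>^2 * (1-\<gamma>)^j * \<kappa>B else 0)
      = (\<Sum>j\<in>{0..H}. if i + j + 1 \<in> {0..2*H} then \<kappa>^2 * (1-\<gamma>)^j * \<kappa>B else 0)"
    by (subst sum.swap) (simp add: sum.delta')
  also have "\<dots> \<le> \<kappa>^2 * \<kappa>B * (\<Sum>j\<in>{0..H}. (1-\<gamma>)^j)"
    unfolding sum_distrib_left using gamma_less_1 kappaB_ge_1 by (intro sum_mono) (auto simp: mult_ac)
  also have "\<dots> \<le> \<kappa>^2 * \<kappa>B * (1 / (1 - (1 - \<gamma>)))"
    using gamma_pos gamma_less_1 kappaB_ge_1 by (intro mult_left_mono sum_power_le_inverse_one_minus) auto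
  moreover have "0 \<le> \<kappa>^2 * \<kappa>B / \<gamma>" using gamma_pos kappaB_ge_1 by simp
  ultimately have "(\<Sum>l\<in>{0..2*H}. block_weight i l) \<le> \<kappa>^2 * \<kappa>B / \<gamma> + 1"
    unfolding block_weight_def sum.distrib by (simp add: sum.delta')
  also have "\<dots> \<le> 2 * \<kappa>^2 * \<kappa>B / \<gamma>"
  proof -
    have "1 * 1 \<le> \<kappa>^2 * \<kappa>B" using kappa_ge_1 kappaB_ge_1 by (intro mult_mono) (auto simp: one_le_power)
    also have "\<dots> \<le> \<kappa>^2 * \<kappa>B / \<gamma>"
      using gamma_pos gamma_less_1 kappaB_ge_1 mult_left_mono[of \<gamma> 1 "\<kappa>^2 * \<kappa>B"]
      by (simp add: le_divide_eq)
    finally have "1 \<le> \<kappa>^2 * \<kappa>B / \<gamma>" by simp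
    then have "\<kappa>^2 * \<kappa>B / \<gamma> + 1 \<le> \<kappa>^2 * \<kappa>B / \<gamma> + \<kappa>^2 * \<kappa>B / \<gamma>" by linarith
    also have "\<dots> = 2 * \<kappa>^2 * \<kappa>B / \<gamma>" by simp
    finally show ?thesis .
  qed
  finally show ?thesis .
qed

end

lemma grad_frob_nonneg: "0 \<le> grad_frob c A B K H M w t \<omega>"
  unfolding grad_frob_def by (simp add: sum_nonneg)

context stable_policy
begin

lemma sum_sq_block_partials_le:
  assumes "i < H" and "0 \<le> Gc"
    and c_deriv: "((\<lambda>p. c t (fst p) (snd p)) has_derivative (\<lambda>h. gx \<bullet> fst h + gu \<bullet> snd h))
      (at (ystate A B K H (\<lambda>_. M) w t \<omega>, vinput A B K H (\<lambda>_. M) w t \<omega>))"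
    and gx_le: "norm gx \<le> Gc * norm (ystate A B K H (\<lambda>_. M) w t \<omega>)"
    and gu_le: "norm gu \<le> Gc * norm (vinput A B K H (\<lambda>_. M) w t \<omega>)"
  shows "(\<Sum>a\<in>(UNIV::'nu set). \<Sum>b\<in>(UNIV::'nx set).
           (deriv (\<lambda>s. fcost c A B K H (M(i := M i + s *\<^sub>R munit a b)) w t \<omega>) 0)^2)
         \<le> (Gc * (\<Sum>l\<in>{0..2*H}. yv_weight l * noise_norm w t \<omega> l)
                 * (\<Sum>l\<in>{0..2*H}. block_weight i l * noise_norm w t \<omega> l))^2"
proof -
  define X where "X = norm (ystate A B K H (\<lambda>_. M) w t \<omega>) + \<kappa> * norm (vinput A B K H (\<lambda>_. M) w t \<omega>)"
  define u where "u = noise_norm w t \<omega>"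
  have X_le: "X \<le> (\<Sum>l\<in>{0..2*H}. yv_weight l * u l)"
    unfolding X_def u_def by (rule norm_ystate_vinput_le)
  have GcX: "0 \<le> Gc * X" unfolding X_def using assms(2) kappa_ge_1 by simp
  have row_le: "norm (adjoint_row gx gu A B K j) \<le> Gc * X * (\<kappa>^2 * (1-\<gamma>)^j * \<kappa>B)" for j
  proof -
    have "opnorm K * norm gu \<le> \<kappa> * (Gc * norm (vinput A B K H (\<lambda>_. M) w t \<omega>))"
      using opnorm_K_le gu_le kappa_ge_1 by (intro mult_mono) (auto simp: opnorm_nonneg)
    then have "norm gx + opnorm K * norm gu \<le> Gc * X"
      using gx_le by (simp add: X_def algebra_simps)
    then show ?thesis
      using order_trans[OF norm_adjoint_row_le mult_mono[OF _ opnorm_AK_pow_B_le GcX opnorm_nonneg]] by blast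
  qed
  have "norm (vinput A B K H (\<lambda>_. M) w t \<omega>) \<le> X"
    unfolding X_def using mult_right_mono[OF kappa_ge_1 norm_ge_zero[of "vinput A B K H (\<lambda>_. M) w t \<omega>"]]
      norm_ge_zero[of "ystate A B K H (\<lambda>_. M) w t \<omega>"] by linarith
  then have gu_le_X: "norm gu \<le> Gc * X" using gu_le assms(2) by (meson mult_left_mono order_trans)
  have deriv_eq: "deriv (\<lambda>s. fcost c A B K H (M(i := M i + s *\<^sub>R munit a b)) w t \<omega>) 0 =
     (\<Sum>l\<in>{0..2*H}. \<Sum>j\<in>{0..H}. if l = i + j + 1
        then adjoint_row gx gu A B K j \<bullet> (munit a b *v wext w (int t - 1 - int l) \<omega>) else 0)
     + gu \<bullet> (munit a b *v wext w (int t - int (Suc i)) \<omega>)" for a b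
    unfolding directional_derivative_eq[symmetric]
    by (rule DERIV_imp_deriv[OF fcost_update_block_has_derivative[where c=c and t=t, OF assms(1) c_deriv]])
  have "(\<Sum>l\<in>{0..2*H}. \<Sum>j\<in>{0..H}. if l = i + j + 1
          then norm (adjoint_row gx gu A B K j) * norm (wext w (int t - 1 - int l) \<omega>) else 0)
        \<le> (\<Sum>l\<in>{0..2*H}. Gc * X * ((\<Sum>j\<in>{0..H}. if l = i + j + 1 then \<kappa>^2 * (1-\<gamma>)^j * \<kappa>B else 0) * u l))"
    unfolding sum_distrib_right sum_distrib_left
  proof (intro sum_mono)
    fix l j
    show "(if l = i + j + 1 then norm (adjoint_row gx gu A B K j) * norm (wext w (int t - 1 - int l) \<omega>) else 0)
          \<le> Gc * X * ((if l = i + j + 1 then \<kappa>^2 * (1-\<gamma>)^j * \<kappa>B else 0) * u l)"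
      using mult_right_mono[OF row_le[of j] norm_ge_zero[of "wext w (int t - 1 - int l) \<omega>"]]
      by (auto simp: u_def noise_norm_def mult_ac)
  qed
  moreover have "norm gu * norm (wext w (int t - int (Suc i)) \<omega>)
                   \<le> Gc * X * (\<Sum>l\<in>{0..2*H}. (if l = i then 1 else 0) * u l)"
  proof -
    have "(\<Sum>l\<in>{0..2*H}. (if l = i then 1 else 0) * u l) = (\<Sum>l\<in>{0..2*H}. if l = i then u l else 0)"
      by (intro sum.cong) auto
    also have "\<dots> = norm (wext w (int t - int (Suc i)) \<omega>)"
      using assms(1) by (simp add: sum.delta' u_def noise_norm_def algebra_simps)
    finally show ?thesis using mult_right_mono[OF gu_le_X norm_ge_zero] by simp
  qed
  ultimately have "(\<Sum>l\<in>{0..2*H}. \<Sum>j\<in>{0..H}. if l = i + j + 1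
          then norm (adjoint_row gx gu A B K j) * norm (wext w (int t - 1 - int l) \<omega>) else 0)
        + norm gu * norm (wext w (int t - int (Suc i)) \<omega>)
        \<le> Gc * X * (\<Sum>l\<in>{0..2*H}. block_weight i l * u l)"
    unfolding block_weight_def by (simp add: sum_distrib_left sum.distrib algebra_simps)
  also have "\<dots> \<le> Gc * (\<Sum>l\<in>{0..2*H}. yv_weight l * u l) * (\<Sum>l\<in>{0..2*H}. block_weight i l * u l)"
    using X_le assms(2) block_weight_nonneg
    by (intro mult_right_mono mult_left_mono sum_nonneg) (auto simp: u_def noise_norm_def)
  finally show ?thesis
    unfolding deriv_eq u_def
    by (rule order_trans[OF sum_sq_inner_munit_le power_mono])
       (intro add_nonneg_nonneg sum_nonneg mult_nonneg_nonneg; auto)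
qed

lemma grad_frob_bounds:
  assumes A1: "assm_A1 c Gc"
  shows "(grad_frob c A B K H M w t \<omega>)^2 \<le> Gc^2 * (\<Sum>i<H.
           (\<Sum>l\<in>{0..2*H}. yv_weight l * noise_norm w t \<omega> l)^2
           * (\<Sum>l\<in>{0..2*H}. block_weight i l * noise_norm w t \<omega> l)^2)"
    and "grad_frob c A B K H M w t \<omega> \<le> Gc * (\<Sum>i<H.
           (\<Sum>l\<in>{0..2*H}. yv_weight l * noise_norm w t \<omega> l)
           * (\<Sum>l\<in>{0..2*H}. block_weight i l * noise_norm w t \<omega> l))"
proof -
  define Z where "Z i = Gc * (\<Sum>l\<in>{0..2*H}. yv_weight l * noise_norm w t \<omega> l)
                             * (\<Sum>l\<in>{0..2*H}. block_weight i l * noise_norm w t \<omega> l)" for i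
  define S where "S i = (\<Sum>a\<in>(UNIV::'nu set). \<Sum>b\<in>(UNIV::'nx set).
        (deriv (\<lambda>s. fcost c A B K H (M(i := M i + s *\<^sub>R munit a b)) w t \<omega>) 0)^2)" for i
  have Gc: "1 \<le> Gc" using A1 unfolding assm_A1_def by auto
  obtain gx gu where "((\<lambda>p. c t (fst p) (snd p)) has_derivative (\<lambda>h. gx \<bullet> fst h + gu \<bullet> snd h))
      (at (ystate A B K H (\<lambda>_. M) w t \<omega>, vinput A B K H (\<lambda>_. M) w t \<omega>))"
    and "norm gx \<le> Gc * norm (ystate A B K H (\<lambda>_. M) w t \<omega>)"
    and "norm gu \<le> Gc * norm (vinput A B K H (\<lambda>_. M) w t \<omega>)"
    using A1 unfolding assm_A1_def by blast
  then have S_le: "S i \<le> (Z i)^2" if "i < H" for i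
    unfolding S_def Z_def using that Gc by (intro sum_sq_block_partials_le) auto
  have Z_nonneg: "0 \<le> Z i" for i
    unfolding Z_def using Gc yv_weight_nonneg block_weight_nonneg
    by (intro mult_nonneg_nonneg sum_nonneg) (auto simp: noise_norm_def)
  have grad_eq: "grad_frob c A B K H M w t \<omega> = sqrt (\<Sum>i<H. S i)"
    unfolding grad_frob_def S_def ..
  have "(grad_frob c A B K H M w t \<omega>)^2 = (\<Sum>i<H. S i)"
    unfolding grad_eq S_def by (simp add: sum_nonneg)
  also have "\<dots> \<le> (\<Sum>i<H. (Z i)^2)" using S_le by (intro sum_mono) auto
  finally show "(grad_frob c A B K H M w t \<omega>)^2 \<le> Gc^2 * (\<Sum>i<H.
           (\<Sum>l\<in>{0..2*H}. yv_weight l * noise_norm w t \<omega> l)^2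
           * (\<Sum>l\<in>{0..2*H}. block_weight i l * noise_norm w t \<omega> l)^2)"
    unfolding Z_def power_mult_distrib by (simp only: sum_distrib_left[symmetric] mult.assoc)
  have "grad_frob c A B K H M w t \<omega> \<le> sqrt (\<Sum>i<H. (Z i)^2)"
    unfolding grad_eq using S_le by (intro real_sqrt_le_mono sum_mono) auto
  also have "\<dots> \<le> (\<Sum>i<H. Z i)"
    using sum_power2_le_power2_sum[of "{..<H}" Z] Z_nonneg by (intro real_le_lsqrt sum_nonneg) auto
  finally show "grad_frob c A B K H M w t \<omega> \<le> Gc * (\<Sum>i<H.
           (\<Sum>l\<in>{0..2*H}. yv_weight l * noise_norm w t \<omega> l)
           * (\<Sum>l\<in>{0..2*H}. block_weight i l * noise_norm w t \<omega> l))"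
    unfolding Z_def by (simp only: sum_distrib_left[symmetric] mult.assoc)
qed

end

section \<open>Noise moments, measurability and Markov\<close>

lemma borel_measurable_deriv_at:
  fixes F :: "'a \<Rightarrow> real \<Rightarrow> real"
  assumes "\<And>s. (\<lambda>\<omega>. F \<omega> s) \<in> borel_measurable N"
    and "\<And>\<omega>. \<exists>D. (F \<omega> has_real_derivative D) (at 0)"
  shows "(\<lambda>\<omega>. deriv (F \<omega>) 0) \<in> borel_measurable N"
proof (rule borel_measurable_LIMSEQ_real[where u="\<lambda>n \<omega>. (F \<omega> (inverse (Suc n)) - F \<omega> 0) / inverse (Suc n)"])
  fix \<omega>
  obtain D where D: "(F \<omega> has_real_derivative D) (at 0)" using assms(2) by blast
  have "filterlim (\<lambda>n. inverse (real (Suc n))) (at 0) sequentially"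
    unfolding filterlim_at using LIMSEQ_inverse_real_of_nat by auto
  from filterlim_compose[OF DERIV_D[OF D] this]
  show "(\<lambda>n. (F \<omega> (inverse (Suc n)) - F \<omega> 0) / inverse (Suc n)) \<longlonglongrightarrow> deriv (F \<omega>) 0"
    using DERIV_imp_deriv[OF D] by simp
qed (use assms(1) in measurable)

context prob_space
begin

definition has_mean_le :: "('a \<Rightarrow> real) \<Rightarrow> real \<Rightarrow> bool" where
  "has_mean_le f a \<longleftrightarrow> integrable M f \<and> expectation f \<le> a"

lemma has_mean_le_add: "has_mean_le f a \<Longrightarrow> has_mean_le g b \<Longrightarrow> has_mean_le (\<lambda>\<omega>. f \<omega> + g \<omega>) (a + b)"
  unfolding has_mean_le_def by auto

lemma has_mean_le_cmult: "0 \<le> c \<Longrightarrow> has_mean_le f a \<Longrightarrow> has_mean_le (\<lambda>\<omega>. c * f \<omega>) (c * a)"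
  unfolding has_mean_le_def by (auto intro: mult_left_mono)

lemma has_mean_le_sum:
  "(\<And>i. i \<in> S \<Longrightarrow> has_mean_le (f i) (a i)) \<Longrightarrow> has_mean_le (\<lambda>\<omega>. \<Sum>i\<in>S. f i \<omega>) (\<Sum>i\<in>S. a i)"
proof (induction S rule: infinite_finite_induct)
  case (insert x F)
  then show ?case using has_mean_le_add[of "f x" "a x"] by simp
qed (auto simp: has_mean_le_def)

lemma has_mean_le_mono: "has_mean_le f a \<Longrightarrow> a \<le> b \<Longrightarrow> has_mean_le f b"
  unfolding has_mean_le_def by auto

lemma prob_le_ge_of_has_mean_le:
  fixes g f :: "'a \<Rightarrow> real"
  assumes "g \<in> borel_measurable M" and mean: "has_mean_le f e"
    and g_le: "\<And>\<omega>. \<omega> \<in> space M \<Longrightarrow> g \<omega> \<le> f \<omega>" and f_nonneg: "\<And>\<omega>. \<omega> \<in> space M \<Longrightarrow> 0 \<le> f \<omega>"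
    and "0 < a"
  shows "prob {\<omega> \<in> space M. g \<omega> \<le> a} \<ge> 1 - e / a"
proof -
  have f: "integrable M f" "expectation f \<le> e" using mean unfolding has_mean_le_def by auto
  then have ev: "{\<omega> \<in> space M. a \<le> f \<omega>} \<in> events" by measurable
  have "prob {\<omega> \<in> space M. a \<le> f \<omega>} \<le> expectation f / a"
    using integral_Markov_inequality_measure[OF f(1) ev _ \<open>0 < a\<close>] f_nonneg by auto
  also have "\<dots> \<le> e / a" using f(2) \<open>0 < a\<close> by (simp add: divide_right_mono)
  finally have "prob {\<omega> \<in> space M. a \<le> f \<omega>} \<le> e / a" .
  moreover have "prob (space M - {\<omega> \<in> space M. a \<le> f \<omega>}) \<le> prob {\<omega> \<in> space M. g \<omega> \<le> a}"
    using g_le assms(1) by (intro finite_measure_mono) (force, measurable)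
  ultimately show ?thesis using prob_compl[OF ev] by linarith
qed

lemma measurable_wext:
  assumes "assm_A2ii w \<sigma>"
  shows "(\<lambda>\<omega>. wext w s \<omega>) \<in> borel_measurable M"
  using assms unfolding assm_A2ii_def wext_def by (cases "s < 0") auto

lemma has_mean_le_norm_wext_pow4:
  assumes "assm_A2ii w \<sigma>"
  shows "has_mean_le (\<lambda>\<omega>. norm (wext w s \<omega>) ^ 4) (\<sigma>^4)"
  using assms unfolding assm_A2ii_def has_mean_le_def wext_def by (cases "s < 0") (auto simp: zero_le_even_power)

text \<open>Jensen's inequality \<open>(\<bbbE>X)\<^sup>2 \<le> \<bbbE>(X\<^sup>2)\<close> turns the fourth-moment bound A2(ii) into a second-moment bound.\<close>

lemma has_mean_le_norm_wext_pow2: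
  assumes "assm_A2ii w \<sigma>"
  shows "has_mean_le (\<lambda>\<omega>. norm (wext w s \<omega>) ^ 2) (\<sigma>^2)"
proof -
  define X where "X \<omega> = norm (wext w s \<omega>) ^ 2" for \<omega>
  have X_sq: "(\<lambda>\<omega>. (X \<omega>)^2) = (\<lambda>\<omega>. norm (wext w s \<omega>) ^ 4)" unfolding X_def by (simp flip: power_mult)
  have "X \<in> borel_measurable M" unfolding X_def using measurable_wext[OF assms] by measurable
  moreover have X_sq_int: "integrable M (\<lambda>\<omega>. (X \<omega>)^2)"
    using has_mean_le_norm_wext_pow4[OF assms] unfolding X_sq has_mean_le_def by simp
  ultimately have X_int: "integrable M X" by (rule square_integrable_imp_integrable)
  have "(expectation X)^2 \<le> expectation (\<lambda>\<omega>. (X \<omega>)^2)"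
    using variance_positive[of X] variance_eq[OF X_int X_sq_int] by simp
  also have "\<dots> \<le> (\<sigma>^2)^2"
    using has_mean_le_norm_wext_pow4[OF assms] unfolding X_sq has_mean_le_def by (simp flip: power_mult)
  finally have "expectation X \<le> \<sigma>^2" by (rule power2_le_imp_le) simp
  then show ?thesis using X_int unfolding X_def has_mean_le_def by simp
qed

lemma has_mean_le_weighted_noise_pow:
  assumes "assm_A2ii w \<sigma>" "k \<in> {2, 4}"
    and "\<And>l. l \<in> S \<Longrightarrow> 0 \<le> \<alpha> l" and "(\<Sum>l\<in>S. \<alpha> l) \<le> V"
  shows "has_mean_le (\<lambda>\<omega>. \<Sum>l\<in>S. \<alpha> l * (noise_norm w t \<omega> l)^k) (V * \<sigma>^k)"
proof -
  have "has_mean_le (\<lambda>\<omega>. norm (wext w s \<omega>) ^ k) (\<sigma>^k)" for s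
    using assms(2) has_mean_le_norm_wext_pow2[OF assms(1)] has_mean_le_norm_wext_pow4[OF assms(1)] by auto
  then have "has_mean_le (\<lambda>\<omega>. \<Sum>l\<in>S. \<alpha> l * (noise_norm w t \<omega> l)^k) (\<Sum>l\<in>S. \<alpha> l * \<sigma>^k)"
    using assms(3) unfolding noise_norm_def by (intro has_mean_le_sum has_mean_le_cmult) auto
  moreover have "(\<Sum>l\<in>S. \<alpha> l * \<sigma>^k) \<le> V * \<sigma>^k"
    using assms(2,4) by (auto simp: sum_distrib_right[symmetric] mult_right_mono zero_le_even_power)
  ultimately show ?thesis by (rule has_mean_le_mono)
qed

lemma measurable_ystate:
  assumes "assm_A2ii w \<sigma>"
  shows "(\<lambda>\<omega>. ystate A B K H Ms w t \<omega>) \<in> borel_measurable M"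
  unfolding ystate_def
  by (intro borel_measurable_sum borel_measurable_continuous_on[OF matrix_vector_mult_linear_continuous_on]
        measurable_wext[OF assms])

lemma measurable_vinput:
  assumes "assm_A2ii w \<sigma>"
  shows "(\<lambda>\<omega>. vinput A B K H Ms w t \<omega>) \<in> borel_measurable M"
  unfolding vinput_def
  by (intro borel_measurable_add borel_measurable_uminus borel_measurable_sum measurable_wext[OF assms]
        measurable_ystate[OF assms] borel_measurable_continuous_on[OF matrix_vector_mult_linear_continuous_on])

lemma measurable_fcost:
  assumes A1: "assm_A1 c Gc" and A2: "assm_A2ii w \<sigma>"
  shows "(\<lambda>\<omega>. fcost c A B K H Mp w t \<omega>) \<in> borel_measurable M"
proof -
  have "isCont (\<lambda>p. c t (fst p) (snd p)) p" for p
  proof -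
    obtain gx gu where "((\<lambda>p. c t (fst p) (snd p)) has_derivative (\<lambda>h. gx \<bullet> fst h + gu \<bullet> snd h))
        (at (fst p, snd p))"
      using A1 unfolding assm_A1_def by blast
    then show ?thesis using has_derivative_continuous by fastforce
  qed
  then have "continuous_on UNIV (\<lambda>p. c t (fst p) (snd p))" by (simp add: continuous_at_imp_continuous_on)
  from borel_measurable_continuous_on[OF this borel_measurable_Pair[OF measurable_ystate[OF A2] measurable_vinput[OF A2]]]
  show ?thesis unfolding fcost_def Fcost_def by simp
qed

lemma measurable_grad_frob:
  assumes A1: "assm_A1 c Gc" and A2: "assm_A2ii w \<sigma>"
  shows "(\<lambda>\<omega>. grad_frob c A B K H Mp w t \<omega>) \<in> borel_measurable M"
proof -
  have "(\<lambda>\<omega>. deriv (\<lambda>s. fcost c A B K H (Mp(i := Mp i + s *\<^sub>R munit a b)) w t \<omega>) 0) \<in> borel_measurable M"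
    if "i < H" for i a b
  proof (rule borel_measurable_deriv_at)
    fix \<omega>
    obtain gx gu where "((\<lambda>p. c t (fst p) (snd p)) has_derivative (\<lambda>h. gx \<bullet> fst h + gu \<bullet> snd h))
      (at (ystate A B K H (\<lambda>_. Mp) w t \<omega>, vinput A B K H (\<lambda>_. Mp) w t \<omega>))"
      using A1 unfolding assm_A1_def by blast
    from fcost_update_block_has_derivative[where c=c and t=t, OF that this]
    show "\<exists>D. ((\<lambda>s. fcost c A B K H (Mp(i := Mp i + s *\<^sub>R munit a b)) w t \<omega>) has_real_derivative D) (at 0)"
      by blast
  qed (rule measurable_fcost[OF A1 A2])
  then show ?thesis unfolding grad_frob_def
    by (intro measurable_compose[OF _ borel_measurable_sqrt] borel_measurable_sum borel_measurable_power) auto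
qed

end

section \<open>Tail bounds\<close>

context prob_space
begin

lemma prob_sum_grad_frob_sq_le:
  assumes "stable_policy A B K Mp H \<kappa> \<gamma> \<kappa>B" and A1: "assm_A1 c Gc" and A2: "assm_A2ii w \<sigma>" and "0 < a"
  shows "prob {\<omega> \<in> space M. (\<Sum>t<T. (grad_frob c A B K H Mp w t \<omega>)^2) \<le> a}
           \<ge> 1 - real T * Gc^2 * real H * (8 * \<kappa>B^2 * \<kappa>^7 / \<gamma>^2)^2 * (2 * \<kappa>^2 * \<kappa>B / \<gamma>)^2 * \<sigma>^4 / a"
proof -
  interpret stable_policy A B K Mp H \<kappa> \<gamma> \<kappa>B by fact
  define V1 where "V1 = 8 * \<kappa>B^2 * \<kappa>^7 / \<gamma>^2"
  define V2 where "V2 = 2 * \<kappa>^2 * \<kappa>B / \<gamma>"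
  have V: "0 < V1" "0 < V2" using gamma_pos kappa_ge_1 kappaB_ge_1 by (simp_all add: V1_def V2_def)
  define bound where "bound t \<omega> = Gc^2 * (\<Sum>i<H. 1/2 *
      (V2^2 * V1 * (\<Sum>l\<in>{0..2*H}. yv_weight l * (noise_norm w t \<omega> l)^4)
       + V1^2 * V2 * (\<Sum>l\<in>{0..2*H}. block_weight i l * (noise_norm w t \<omega> l)^4)))" for t \<omega>
  have grad_le: "(grad_frob c A B K H Mp w t \<omega>)^2 \<le> bound t \<omega>" for t \<omega>
  proof -
    have "(grad_frob c A B K H Mp w t \<omega>)^2 \<le> Gc^2 * (\<Sum>i<H.
           (\<Sum>l\<in>{0..2*H}. yv_weight l * noise_norm w t \<omega> l)^2
           * (\<Sum>l\<in>{0..2*H}. block_weight i l * noise_norm w t \<omega> l)^2)"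
      by (rule grad_frob_bounds(1)[OF A1])
    also have "\<dots> \<le> bound t \<omega>"
      unfolding bound_def
      using weighted_sums_product_sq_le[OF yv_weight_nonneg block_weight_nonneg
              sum_yv_weight_le[folded V1_def] sum_block_weight_le[folded V2_def] V]
      by (intro mult_left_mono sum_mono) auto
    finally show ?thesis .
  qed
  have "has_mean_le (\<lambda>\<omega>. 1/2 *
      (V2^2 * V1 * (\<Sum>l\<in>{0..2*H}. yv_weight l * (noise_norm w t \<omega> l)^4)
       + V1^2 * V2 * (\<Sum>l\<in>{0..2*H}. block_weight i l * (noise_norm w t \<omega> l)^4)))
      (1/2 * (V2^2 * V1 * (V1 * \<sigma>^4) + V1^2 * V2 * (V2 * \<sigma>^4)))" for t i
    using V by (intro has_mean_le_cmult has_mean_le_add has_mean_le_weighted_noise_pow[OF A2]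
        yv_weight_nonneg block_weight_nonneg sum_yv_weight_le[folded V1_def] sum_block_weight_le[folded V2_def])
      auto
  then have "has_mean_le (bound t) (Gc^2 * (\<Sum>i<H. 1/2 * (V2^2 * V1 * (V1 * \<sigma>^4) + V1^2 * V2 * (V2 * \<sigma>^4))))"
    for t unfolding bound_def by (intro has_mean_le_cmult[of "Gc^2"] has_mean_le_sum) simp_all
  then have "has_mean_le (\<lambda>\<omega>. \<Sum>t<T. bound t \<omega>) (\<Sum>t<T. Gc^2 * (real H * (V1^2 * V2^2 * \<sigma>^4)))"
    by (intro has_mean_le_sum) (simp add: power2_eq_square algebra_simps)
  moreover have "(\<lambda>\<omega>. \<Sum>t<T. (grad_frob c A B K H Mp w t \<omega>)^2) \<in> borel_measurable M"
    by (intro borel_measurable_sum borel_measurable_power measurable_grad_frob[OF A1 A2])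
  ultimately have "prob {\<omega> \<in> space M. (\<Sum>t<T. (grad_frob c A B K H Mp w t \<omega>)^2) \<le> a}
      \<ge> 1 - (\<Sum>t<T. Gc^2 * (real H * (V1^2 * V2^2 * \<sigma>^4))) / a"
    using grad_le order_trans[OF zero_le_power2 grad_le] \<open>0 < a\<close>
    by (intro prob_le_ge_of_has_mean_le) (auto intro: sum_mono sum_nonneg)
  then show ?thesis by (simp add: V1_def V2_def mult_ac)
qed

lemma prob_sum_lagged_grad_frob_le:
  assumes "stable_policy A B K Mp H \<kappa> \<gamma> \<kappa>B" and A1: "assm_A1 c Gc" and A2: "assm_A2ii w \<sigma>" and "0 < a"
  shows "prob {\<omega> \<in> space M.
             (\<Sum>t<T. \<Sum>i\<in>{1..min (H + 1) t}. \<Sum>k\<in>{1..i}. grad_frob c A B K H Mp w (t - k) \<omega>) \<le> a}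
           \<ge> 1 - real T * (real H + 1)^2 * Gc * real H * (8 * \<kappa>B^2 * \<kappa>^7 / \<gamma>^2) * (2 * \<kappa>^2 * \<kappa>B / \<gamma>)
                 * \<sigma>^2 / a"
proof -
  interpret stable_policy A B K Mp H \<kappa> \<gamma> \<kappa>B by fact
  define V1 where "V1 = 8 * \<kappa>B^2 * \<kappa>^7 / \<gamma>^2"
  define V2 where "V2 = 2 * \<kappa>^2 * \<kappa>B / \<gamma>"
  have V: "0 < V1" "0 < V2" using gamma_pos kappa_ge_1 kappaB_ge_1 by (simp_all add: V1_def V2_def)
  have Gc: "1 \<le> Gc" using A1 unfolding assm_A1_def by simp
  define bound where "bound t \<omega> = Gc * (\<Sum>i<H. 1/2 *
      (V2 * (\<Sum>l\<in>{0..2*H}. yv_weight l * (noise_norm w t \<omega> l)^2)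
       + V1 * (\<Sum>l\<in>{0..2*H}. block_weight i l * (noise_norm w t \<omega> l)^2)))" for t \<omega>
  have grad_le: "grad_frob c A B K H Mp w t \<omega> \<le> bound t \<omega>" for t \<omega>
  proof -
    have "grad_frob c A B K H Mp w t \<omega> \<le> Gc * (\<Sum>i<H.
           (\<Sum>l\<in>{0..2*H}. yv_weight l * noise_norm w t \<omega> l)
           * (\<Sum>l\<in>{0..2*H}. block_weight i l * noise_norm w t \<omega> l))"
      by (rule grad_frob_bounds(2)[OF A1])
    also have "\<dots> \<le> bound t \<omega>"
      unfolding bound_def
      using Gc weighted_sums_product_le[OF yv_weight_nonneg block_weight_nonneg
              sum_yv_weight_le[folded V1_def] sum_block_weight_le[folded V2_def] V]
      by (intro mult_left_mono sum_mono) auto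
    finally show ?thesis .
  qed
  have "has_mean_le (\<lambda>\<omega>. 1/2 *
      (V2 * (\<Sum>l\<in>{0..2*H}. yv_weight l * (noise_norm w t \<omega> l)^2)
       + V1 * (\<Sum>l\<in>{0..2*H}. block_weight i l * (noise_norm w t \<omega> l)^2)))
      (1/2 * (V2 * (V1 * \<sigma>^2) + V1 * (V2 * \<sigma>^2)))" for t i
    using V by (intro has_mean_le_cmult has_mean_le_add has_mean_le_weighted_noise_pow[OF A2]
        yv_weight_nonneg block_weight_nonneg sum_yv_weight_le[folded V1_def] sum_block_weight_le[folded V2_def])
      auto
  then have "has_mean_le (bound t) (Gc * (\<Sum>i<H. 1/2 * (V2 * (V1 * \<sigma>^2) + V1 * (V2 * \<sigma>^2))))" for t
    unfolding bound_def using Gc by (intro has_mean_le_cmult[of Gc] has_mean_le_sum) simp_all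
  then have "has_mean_le (\<lambda>\<omega>. \<Sum>t<T. \<Sum>i\<in>{1..min (H + 1) t}. \<Sum>k\<in>{1..i}. bound (t - k) \<omega>)
      (\<Sum>t<T. \<Sum>i\<in>{1..min (H + 1) t}. \<Sum>k\<in>{1..i}. Gc * (real H * (V1 * V2 * \<sigma>^2)))"
    by (intro has_mean_le_sum) (simp add: algebra_simps)
  then have "has_mean_le (\<lambda>\<omega>. \<Sum>t<T. \<Sum>i\<in>{1..min (H + 1) t}. \<Sum>k\<in>{1..i}. bound (t - k) \<omega>)
      (real T * (real H + 1)^2 * (Gc * (real H * (V1 * V2 * \<sigma>^2))))"
    using Gc V by (intro has_mean_le_mono[OF _ sum_lagged_const_le]) auto
  moreover have "(\<lambda>\<omega>. \<Sum>t<T. \<Sum>i\<in>{1..min (H + 1) t}. \<Sum>k\<in>{1..i}. grad_frob c A B K H Mp w (t - k) \<omega>)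
      \<in> borel_measurable M"
    by (intro borel_measurable_sum measurable_grad_frob[OF A1 A2])
  ultimately have "prob {\<omega> \<in> space M.
      (\<Sum>t<T. \<Sum>i\<in>{1..min (H + 1) t}. \<Sum>k\<in>{1..i}. grad_frob c A B K H Mp w (t - k) \<omega>) \<le> a}
      \<ge> 1 - real T * (real H + 1)^2 * (Gc * (real H * (V1 * V2 * \<sigma>^2))) / a"
    using grad_le order_trans[OF grad_frob_nonneg grad_le] \<open>0 < a\<close>
    by (intro prob_le_ge_of_has_mean_le) (auto intro!: sum_mono sum_nonneg)
  then show ?thesis by (simp add: V1_def V2_def mult_ac)
qed

end

lemma horizon_le:
  assumes "0 < \<gamma>" "\<gamma> < 1" "3 \<le> T"
  shows "1 \<le> ln (real T)" and "real (nat \<lceil>2 / \<gamma> * ln (real T)\<rceil>) \<le> 3 * ln (real T) / \<gamma>"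
    and "real (nat \<lceil>2 / \<gamma> * ln (real T)\<rceil>) + 1 \<le> 4 * ln (real T) / \<gamma>"
proof -
  have "exp 1 \<le> real T" using exp_le assms(3) by linarith
  then show L: "1 \<le> ln (real T)" using ln_exp by (metis exp_gt_zero ln_le_cancel_iff less_le_trans)
  have "0 \<le> 2 / \<gamma> * ln (real T)" using assms(1) L by simp
  then have "real (nat \<lceil>2 / \<gamma> * ln (real T)\<rceil>) \<le> 2 / \<gamma> * ln (real T) + 1"
    using of_int_ceiling_le_add_one[of "2 / \<gamma> * ln (real T)"] by linarith
  moreover have "1 \<le> ln (real T) / \<gamma>" using L assms(1,2) by (simp add: le_divide_eq)
  moreover have "2 / \<gamma> * ln (real T) = 2 * (ln (real T) / \<gamma>)" "3 * ln (real T) / \<gamma> = 3 * (ln (real T) / \<gamma>)"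
    "4 * ln (real T) / \<gamma> = 4 * (ln (real T) / \<gamma>)" by simp_all
  ultimately show "real (nat \<lceil>2 / \<gamma> * ln (real T)\<rceil>) \<le> 3 * ln (real T) / \<gamma>"
    and "real (nat \<lceil>2 / \<gamma> * ln (real T)\<rceil>) + 1 \<le> 4 * ln (real T) / \<gamma>"
    by linarith+
qed

lemma failure_bound_sq_le:
  fixes \<gamma> \<kappa> \<kappa>B L Hr n C Gc \<sigma> T :: real
  assumes g: "0 < \<gamma>" "\<gamma> < 1" and "1 \<le> \<kappa>" "1 \<le> \<kappa>B" and L: "1 \<le> L"
    and Hr: "0 \<le> Hr" "Hr \<le> 3 * L / \<gamma>" and n: "1 \<le> n" and "0 < C" "0 < T"
  shows "T * Gc^2 * Hr * (8 * \<kappa>B^2 * \<kappa>^7 / \<gamma>^2)^2 * (2 * \<kappa>^2 * \<kappa>B / \<gamma>)^2 * \<sigma>^4 / (C * T * L^4)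
           \<le> 26244 * \<sigma>^4 * n^2 * Gc^2 * \<kappa>B^6 * \<kappa>^18 / (C * \<gamma>^8 * (1 - \<gamma>)^4)"
proof -
  define Q where "Q = \<sigma>^4 * Gc^2 * \<kappa>B^6 * \<kappa>^18 / C"
  have Q: "0 \<le> Q" using assms by (simp add: Q_def zero_le_even_power)
  have "T * Gc^2 * Hr * (8 * \<kappa>B^2 * \<kappa>^7 / \<gamma>^2)^2 * (2 * \<kappa>^2 * \<kappa>B / \<gamma>)^2 * \<sigma>^4 / (C * T * L^4)
        = 256 * Q * (Hr / L^4) / \<gamma>^6"
    using assms by (simp add: Q_def field_simps power_mult_distrib flip: power_mult power_add)
  also have "\<dots> \<le> 256 * Q * (3 / \<gamma>) / \<gamma>^6"
  proof -
    have "Hr / L^4 \<le> (3 * L / \<gamma>) / L^4" using divide_right_mono[OF Hr(2), of "L^4"] L by simp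
    also have "\<dots> = 3 / \<gamma> * (1 / L^3)" using L by (simp add: power_numeral_reduce field_simps)
    also have "\<dots> \<le> 3 / \<gamma>"
      by (rule mult_left_le) (use g L one_le_power[OF L, of 3] in \<open>auto simp: divide_le_eq_1\<close>)
    finally show ?thesis using Q g by (intro divide_right_mono mult_left_mono) auto
  qed
  also have "\<dots> \<le> 26244 * Q * (n^2 / (\<gamma>^8 * (1 - \<gamma>)^4))"
  proof -
    have "(1 - \<gamma>)^4 \<le> 1" using g by (intro power_le_one) auto
    also have "1 \<le> n^2" using n by (simp add: one_le_power)
    finally have "\<gamma>^8 * (1 - \<gamma>)^4 \<le> \<gamma>^7 * n^2"
      using g power_decreasing[of 7 8 \<gamma>] by (intro mult_mono) auto
    then have "1 / \<gamma>^7 \<le> n^2 / (\<gamma>^8 * (1 - \<gamma>)^4)" using g by (simp add: field_simps)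
    have "256 * Q * (3 / \<gamma>) / \<gamma>^6 = 768 * Q * (1 / \<gamma>^7)"
      using g power_Suc[of \<gamma> 6] by (simp add: field_simps)
    also have "\<dots> \<le> 26244 * Q * (n^2 / (\<gamma>^8 * (1 - \<gamma>)^4))"
      by (rule mult_mono) (use Q g \<open>1 / \<gamma>^7 \<le> _\<close> in auto)
    finally show ?thesis .
  qed
  finally show ?thesis by (simp add: Q_def field_simps)
qed

lemma failure_bound_lagged_le:
  fixes \<gamma> \<kappa> \<kappa>B L Hr n C Gc \<sigma> T :: real
  assumes g: "0 < \<gamma>" "\<gamma> < 1" and "1 \<le> \<kappa>" "1 \<le> \<kappa>B" and L: "1 \<le> L"
    and Hr: "0 \<le> Hr" "Hr \<le> 3 * L / \<gamma>" "Hr + 1 \<le> 4 * L / \<gamma>" and n: "1 \<le> n"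
    and "0 < C" "0 < T" "0 \<le> Gc"
  shows "T * (Hr + 1)^2 * Gc * Hr * (8 * \<kappa>B^2 * \<kappa>^7 / \<gamma>^2) * (2 * \<kappa>^2 * \<kappa>B / \<gamma>) * \<sigma>^2
             / (C * T * L powr (9/2))
           \<le> 39366 * \<sigma>^2 * n^2 * Gc * \<kappa>B^3 * \<kappa>^9 / (C * \<gamma> powr (13/2) * (1 - \<gamma>)^2)"
proof -
  define Q where "Q = \<sigma>^2 * Gc * \<kappa>B^3 * \<kappa>^9 / C"
  have Q: "0 \<le> Q" using assms by (simp add: Q_def)
  have Lp: "0 < L powr (9/2)" using L by simp
  have "T * (Hr + 1)^2 * Gc * Hr * (8 * \<kappa>B^2 * \<kappa>^7 / \<gamma>^2) * (2 * \<kappa>^2 * \<kappa>B / \<gamma>) * \<sigma>^2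
             / (C * T * L powr (9/2))
        = 16 * Q * ((Hr + 1)^2 * Hr) / (\<gamma>^3 * L powr (9/2))"
    using assms Lp by (simp add: Q_def field_simps flip: power_add)
      (simp add: power2_eq_square power3_eq_cube mult_ac)
  also have "\<dots> \<le> 16 * Q * ((4 * L / \<gamma>)^2 * (3 * L / \<gamma>)) / (\<gamma>^3 * L powr (9/2))"
    using Q Hr g Lp by (intro divide_right_mono mult_left_mono mult_mono power_mono) auto
  also have "\<dots> = 768 * Q * (L^3 / L powr (9/2)) / \<gamma>^6"
    using g by (simp add: field_simps power2_eq_square power3_eq_cube power_numeral_reduce)
  also have "\<dots> \<le> 768 * Q * 1 / \<gamma>^6"
  proof -
    have "L^3 = L powr 3" using L by (simp add: powr_realpow)
    also have "\<dots> \<le> L powr (9/2)" using L by (intro powr_mono) auto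
    finally show ?thesis using Q Lp g by (intro divide_right_mono mult_left_mono) auto
  qed
  also have "\<dots> \<le> 39366 * Q * (n^2 / (\<gamma> powr (13/2) * (1 - \<gamma>)^2))"
  proof -
    have "\<gamma> powr (13/2) \<le> \<gamma> powr 6" using g by (intro powr_mono') auto
    also have "\<dots> = \<gamma>^6" using g by (simp add: powr_realpow)
    finally have "\<gamma> powr (13/2) * (1 - \<gamma>)^2 \<le> \<gamma>^6 * n^2"
      using g n one_le_power[OF n, of 2] power_le_one[of "1 - \<gamma>" 2]
      by (intro mult_mono) (auto simp: order_trans[OF _ one_le_power[OF n]])
    then have inv_le: "1 / \<gamma>^6 \<le> n^2 / (\<gamma> powr (13/2) * (1 - \<gamma>)^2)" using g by (simp add: field_simps)
    have "768 * Q * (1 / \<gamma>^6) \<le> 39366 * Q * (n^2 / (\<gamma> powr (13/2) * (1 - \<gamma>)^2))"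
      by (rule mult_mono[OF _ inv_le]) (use Q g in auto)
    then show ?thesis by simp
  qed
  finally show ?thesis by (simp add: Q_def field_simps)
qed

theorem lemma4:
  fixes \<Omega> :: "'w measure"
    and w :: "nat \<Rightarrow> 'w \<Rightarrow> real^'nx"
    and c :: "nat \<Rightarrow> real^'nx \<Rightarrow> real^'nu \<Rightarrow> real"
    and A :: "real^'nx^'nx" and B :: "real^'nu^'nx" and K :: "real^'nx^'nu"
    and M :: "nat \<Rightarrow> real^'nx^'nu"
    and \<kappa> \<gamma> Gc \<sigma>w C :: real and T :: nat
  assumes "prob_space \<Omega>"
    and "assm_A1 c Gc"
    and "prob_space.assm_A2ii \<Omega> w \<sigma>w"
    and "0 < \<gamma>" and "\<gamma> < 1"
    and "strongly_stable A B K \<kappa> \<gamma>"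
    and "C > 0" and "T \<ge> 3"
    and "M \<in> Mset (nat \<lceil>2 / \<gamma> * ln (real T)\<rceil>) (max (opnorm B) 1) \<kappa> \<gamma>"
  shows
   "let H = nat \<lceil>2 / \<gamma> * ln (real T)\<rceil>; n = real (max CARD('nx) CARD('nu)); \<kappa>B = max (opnorm B) 1 in
    prob_space.prob \<Omega> {\<omega> \<in> space \<Omega>.
        (\<Sum>t<T. (grad_frob c A B K H M w t \<omega>)^2) \<le> C * real T * (ln (real T))^4}
      \<ge> 1 - 26244 * \<sigma>w^4 * n^2 * Gc^2 * \<kappa>B^6 * \<kappa>^18 / (C * \<gamma>^8 * (1 - \<gamma>)^4)
    \<and>
    prob_space.prob \<Omega> {\<omega> \<in> space \<Omega>.
        (\<Sum>t<T. \<Sum>i\<in>{1..min (H + 1) t}. \<Sum>k\<in>{1..i}. grad_frob c A B K H M w (t - k) \<omega>)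
          \<le> C * real T * (ln (real T)) powr (9/2)}
      \<ge> 1 - 39366 * \<sigma>w^2 * n^2 * Gc * \<kappa>B^3 * \<kappa>^9 / (C * \<gamma> powr (13/2) * (1 - \<gamma>)^2)"
proof -
  interpret prob_space \<Omega> by fact
  define H where "H = nat \<lceil>2 / \<gamma> * ln (real T)\<rceil>"
  define n where "n = real (max CARD('nx) CARD('nu))"
  define \<kappa>B where "\<kappa>B = max (opnorm B) 1"
  have policy: "stable_policy A B K M H \<kappa> \<gamma> \<kappa>B"
    unfolding H_def \<kappa>B_def using assms(6,4,5,9) by (rule stable_policy_if_strongly_stable)
  then have \<kappa>: "1 \<le> \<kappa>" "1 \<le> \<kappa>B" by (simp_all add: stable_policy_def)
  have Gc: "1 \<le> Gc" using assms(2) unfolding assm_A1_def by simp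
  have L: "1 \<le> ln (real T)" and Hr: "real H \<le> 3 * ln (real T) / \<gamma>" "real H + 1 \<le> 4 * ln (real T) / \<gamma>"
    using horizon_le[OF assms(4,5,8)] unfolding H_def by auto
  have n: "1 \<le> n" unfolding n_def by (simp add: le_max_iff_disj)
  have T: "0 < real T" using assms(8) by simp
  have a1: "0 < C * real T * (ln (real T))^4" and a2: "0 < C * real T * (ln (real T)) powr (9/2)"
    using assms(7) T less_le_trans[OF zero_less_one L] by (auto intro!: mult_pos_pos)
  show ?thesis
    unfolding Let_def H_def[symmetric] n_def[symmetric] \<kappa>B_def[symmetric]
    using prob_sum_grad_frob_sq_le[OF policy assms(2,3) a1, where T=T]
      failure_bound_sq_le[OF assms(4,5) \<kappa> L of_nat_0_le_iff Hr(1) n assms(7) T, of Gc \<sigma>w]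
      prob_sum_lagged_grad_frob_le[OF policy assms(2,3) a2, where T=T]
      failure_bound_lagged_le[OF assms(4,5) \<kappa> L of_nat_0_le_iff Hr n assms(7) T, of Gc \<sigma>w] Gc
    by (intro conjI) simp_all
qed

end
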